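(* Consider the SDP pair and one-step ADMM in the context, with $\mathcal A$ surjective and nonempty KKT set, and let $Z_\star=X_\star-\sigma S_\star$ be the limit of $Z^{(k)}$, where $(X_\star,y_\star,S_\star)$ is a KKT point (strict complementarity is not assumed). Suppose primal nondegeneracy $\mathcal N_{X_\star}\cap\mathcal R(\mathcal A^* )=\{0\}$ and dual nondegeneracy $\mathcal N_{S_\star}\cap\mathcal N(\mathcal A)=\{0\}$ hold. Define $\rho_{\mathrm{ND}}:=\sup_{\|H\|_F=1}\|\widetilde{\mathcal M}(H)\|_F$. Then $\rho_{\mathrm{ND}}<1$, and for any $\rho\in(\rho_{\mathrm{ND}},1)$ there exists $\bar k_{\mathrm{ND}}\in\mathbb N$ such that $\|Z^{(k+1)}-Z_\star\|_F\le\rho\|Z^{(k)}-Z_\star\|_F$ for all integers $k\ge\bar k_{\mathrm{ND}}$.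
   Context: $\mathbb S^n$: real symmetric matrices, trace inner product, Frobenius norm; $\Pi_{\mathbb S^p_+}$ the projection onto the $p\times p$ PSD cone. Data $C,A_i\in\mathbb S^n$, $b\in\mathbb R^m$, $\mathcal AX=(\langle A_i,X\rangle)_i$, $\mathcal A^*y=\sum y_iA_i$, $\mathcal R(\mathcal A^* )$ its range, $\mathcal N(\mathcal A)$ null space. Primal: min $\langle C,X\rangle$ s.t. $\mathcal AX=b$, $X\succeq0$; dual: max $b^\top y$ s.t. $\mathcal A^*y+S=C$, $S\succeq0$; KKT point: primal/dual feasible with $\langle X,S\rangle=0$. $\mathcal P=\mathcal A^*(\mathcal A\mathcal A^* )^{-1}\mathcal A$, $\mathcal P^\perp=\mathrm{Id}-\mathcal P$. For $\sigma>0$, one-step ADMM: $Z^{(k+1)}=\mathcal P(-2\Pi_{\mathbb S^n_+}(Z^{(k)})+Z^{(k)})+\Pi_{\mathbb S^n_+}(Z^{(k)})+\mathcal A^*(\mathcal A\mathcal A^* )^{-1}b+\sigma\mathcal PC-\sigma C$. Let $r=\operatorname{rank}X_\star$, $s=\operatorname{rank}S_\star$ ($r+s\le n$); there is an orthogonal $Q_\star$ with $Z_\star=Q_\star\operatorname{diag}(\lambda_1,\dots,\lambda_n)Q_\star^\top$, $\lambda_1\ge\dots\ge\lambda_r>0=\lambda_{r+1}=\dots=\lambda_{n-s}>\lambda_{n-s+1}\ge\dots\ge\lambda_n$, $X_\star=Q_\star\operatorname{diag}(\lambda_1,..,\lambda_r,0,..,0)Q_\star^\top$, $\sigma S_\star=Q_\star\operatorname{diag}(0,..,0,-\lambda_{n-s+1},..,-\lambda_n)Q_\star^\top$.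 Index sets $\alpha=\{1,..,r\}$, $\beta=\{r+1,..,n-s\}$, $\gamma=\{n-s+1,..,n\}$; for $H\in\mathbb S^n$ write $\hat H=Q_\star^\top HQ_\star$ with blocks $\hat H_{\alpha\alpha},\hat H_{\beta\alpha},\hat H_{\gamma\alpha},\hat H_{\beta\beta},\hat H_{\gamma\beta},\hat H_{\gamma\gamma}$. Let $\tilde\Theta\in\mathbb R^{s\times r}$, $\tilde\Theta_{ij}=\lambda_j/(\lambda_j-\lambda_{n-s+i})$. Define $\widetilde{\mathcal D}(H)=Q_\star\begin{pmatrix}\hat H_{\alpha\alpha}&\hat H_{\beta\alpha}^\top&\tilde\Theta^\top\circ\hat H_{\gamma\alpha}^\top\\ \hat H_{\beta\alpha}&\Pi_{\mathbb S^{|\beta|}_+}(\hat H_{\beta\beta})&0\\ \tilde\Theta\circ\hat H_{\gamma\alpha}&0&0\end{pmatrix}Q_\star^\top$ ($\circ$ Hadamard product), $\widetilde{\mathcal D}^\perp(H)=H-\widetilde{\mathcal D}(H)$, $\widetilde{\mathcal M}(H)=\mathcal P\widetilde{\mathcal D}^\perp(H)+\mathcal P^\perp\widetilde{\mathcal D}(H)$. $\mathcal N_{X_\star}=\{Q_\star\begin{pmatrix}0&0\\0&D\end{pmatrix}Q_\star^\top:D\in\mathbb S^{n-r}\}$, $\mathcal N_{S_\star}=\{Q_\star\begin{pmatrix}A&0\\0&0\end{pmatrix}Q_\star^\top:A\in\mathbb S^{n-s}\}$. *)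

theory Defs
  imports "HOL-Analysis.Analysis"
begin

text \<open>Matrices in S^n are represented as real^'n^'n (with transpose M = M).
  The inner product \<bullet> on real^'n^'n is the trace inner product and norm is
  the Frobenius norm.\<close>

definition psd :: "real^'n^'n \<Rightarrow> bool" where
  "psd M \<longleftrightarrow> transpose M = M \<and> (\<forall>x. 0 \<le> x \<bullet> (M *v x))"

definition proj_onto :: "'a::metric_space set \<Rightarrow> 'a \<Rightarrow> 'a" where
  "proj_onto K M = (THE P. P \<in> K \<and> (\<forall>Q\<in>K. dist M P \<le> dist M Q))"

definition projPSD :: "real^'n^'n \<Rightarrow> real^'n^'n" where
  "projPSD M = proj_onto {N. psd N} M"

text \<open>PSD cone of matrices supported on the block beta x beta (a copy of S^|beta|_+).\<close>
definition projPSD_block :: "'n set \<Rightarrow> real^'n^'n \<Rightarrow> real^'n^'n" where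
  "projPSD_block \<beta> M = proj_onto {N. psd N \<and> (\<forall>i j. N$i$j \<noteq> 0 \<longrightarrow> i \<in> \<beta> \<and> j \<in> \<beta>)}
      (\<chi> i j. if i \<in> \<beta> \<and> j \<in> \<beta> then M$i$j else 0)"

definition opA :: "('m::finite \<Rightarrow> real^'n^'n) \<Rightarrow> real^'n^'n \<Rightarrow> real^'m" where
  "opA A X = (\<chi> i. A i \<bullet> X)"

definition opAadj :: "('m::finite \<Rightarrow> real^'n^'n) \<Rightarrow> real^'m \<Rightarrow> real^'n^'n" where
  "opAadj A y = (\<Sum>i\<in>UNIV. y$i *\<^sub>R A i)"

definition gramA :: "('m::finite \<Rightarrow> real^'n^'n) \<Rightarrow> real^'m^'m" where
  "gramA A = (\<chi> i j. A i \<bullet> A j)"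

definition projP :: "('m::finite \<Rightarrow> real^'n^'n) \<Rightarrow> real^'n^'n \<Rightarrow> real^'n^'n" where
  "projP A H = opAadj A (matrix_inv (gramA A) *v opA A H)"

definition admm_step :: "('m::finite \<Rightarrow> real^'n^'n) \<Rightarrow> real^'m \<Rightarrow> real^'n^'n \<Rightarrow> real
     \<Rightarrow> real^'n^'n \<Rightarrow> real^'n^'n" where
  "admm_step A b C \<sigma> Z =
     projP A (Z - 2 *\<^sub>R projPSD Z) + projPSD Z + opAadj A (matrix_inv (gramA A) *v b)
     + \<sigma> *\<^sub>R projP A C - \<sigma> *\<^sub>R C"

definition is_KKT :: "('m::finite \<Rightarrow> real^'n^'n) \<Rightarrow> real^'m \<Rightarrow> real^'n^'n
     \<Rightarrow> real^'n^'n \<Rightarrow> real^'m \<Rightarrow> real^'n^'n \<Rightarrow> bool" where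
  "is_KKT A b C X y S \<longleftrightarrow> opA A X = b \<and> psd X \<and> opAadj A y + S = C \<and> psd S \<and> X \<bullet> S = 0"

definition diagm :: "('n \<Rightarrow> real) \<Rightarrow> real^'n^'n" where
  "diagm d = (\<chi> i j. if i = j then d i else 0)"

definition hatm :: "real^'n^'n \<Rightarrow> real^'n^'n \<Rightarrow> real^'n^'n" where
  "hatm Q H = transpose Q ** H ** Q"

text \<open>alpha = {i. lam i > 0}, beta = {i. lam i = 0}, gamma = {i. lam i < 0}.\<close>
definition Dtilde :: "real^'n^'n \<Rightarrow> ('n \<Rightarrow> real) \<Rightarrow> real^'n^'n \<Rightarrow> real^'n^'n" where
  "Dtilde Q lam H =
    (let Hh = hatm Q H;
         Bb = projPSD_block {i. lam i = 0} Hh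
     in Q ** (\<chi> i j.
          if (lam i > 0 \<and> lam j \<ge> 0) \<or> (lam i \<ge> 0 \<and> lam j > 0) then Hh$i$j
          else if lam i = 0 \<and> lam j = 0 then Bb$i$j
          else if lam i < 0 \<and> lam j > 0 then lam j / (lam j - lam i) * Hh$i$j
          else if lam i > 0 \<and> lam j < 0 then lam i / (lam i - lam j) * Hh$j$i
          else 0) ** transpose Q)"

definition Mtilde :: "('m::finite \<Rightarrow> real^'n^'n) \<Rightarrow> real^'n^'n \<Rightarrow> ('n \<Rightarrow> real)
     \<Rightarrow> real^'n^'n \<Rightarrow> real^'n^'n" where
  "Mtilde A Q lam H =
     projP A (H - Dtilde Q lam H) + (Dtilde Q lam H - projP A (Dtilde Q lam H))"

definition NX :: "real^'n^'n \<Rightarrow> ('n \<Rightarrow> real) \<Rightarrow> (real^'n^'n) set" where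
  "NX Q lam = {Q ** M ** transpose Q | M. transpose M = M \<and>
                  (\<forall>i j. lam i > 0 \<or> lam j > 0 \<longrightarrow> M$i$j = 0)}"

definition NS :: "real^'n^'n \<Rightarrow> ('n \<Rightarrow> real) \<Rightarrow> (real^'n^'n) set" where
  "NS Q lam = {Q ** M ** transpose Q | M. transpose M = M \<and>
                  (\<forall>i j. lam i < 0 \<or> lam j < 0 \<longrightarrow> M$i$j = 0)}"

end

theory Submission
  imports Defs
begin

text \<open>Write \<open>Z\<^sub>\<star> = Q diag(\<lambda>) Q\<^sup>T\<close> and \<open>T\<close> for the ADMM map. \<open>T\<close> is 4-Lipschitz, so the limit
  \<open>Z\<^sub>\<star>\<close> is a fixed point, and for symmetric \<open>H\<close>
  \<open>T(Z\<^sub>\<star> + H) - Z\<^sub>\<star> = M(H) + (E - 2\<P>E)\<close>, where \<open>E = \<Pi>(Z\<^sub>\<star> + H) - \<Pi>(Z\<^sub>\<star>) - D(H)\<close> is the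
  remainder of the projection onto the PSD cone. The reflection \<open>I - 2\<P>\<close> is an isometry, and in
  the eigenbasis of \<open>Z\<^sub>\<star>\<close> the complementarity of \<open>\<Pi>(Z\<^sub>\<star> + H)\<close> and \<open>\<Pi>(Z\<^sub>\<star> + H) - (Z\<^sub>\<star> + H)\<close>
  bounds \<open>E\<close> by \<open>O(\<parallel>H\<parallel>\<^sup>5\<^sup>/\<^sup>4)\<close>. Hence the local rate is governed by \<open>M\<close>, and
  \<open>\<parallel>M(H)\<parallel>\<^sup>2 \<le> \<parallel>H\<parallel>\<^sup>2 - 2\<langle>H - D(H), D(H)\<rangle>\<close> with a nonnegative cross term. Equality forces
  \<open>H - D(H) \<in> \<N>\<^sub>X \<inter> \<R>(\<A>\<^sup>*)\<close> and \<open>D(H) \<in> \<N>\<^sub>S \<inter> \<N>(\<A>)\<close>, so nondegeneracy gives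
  \<open>\<parallel>M(H)\<parallel> < \<parallel>H\<parallel>\<close> for \<open>H \<noteq> 0\<close>; by continuity and compactness of the unit sphere,
  \<open>\<rho>\<^sub>N\<^sub>D < 1\<close>.\<close>

section \<open>Matrices with the trace inner product\<close>

lemma inner_matrix_eq_sum: "(A::real^'n^'n) \<bullet> B = (\<Sum>i\<in>UNIV. \<Sum>j\<in>UNIV. A$i$j * B$i$j)"
  by (simp add: inner_vec_def)

lemma abs_entry_le_norm: "\<bar>(A::real^'n^'n)$i$j\<bar> \<le> norm A"
proof -
  have "norm (A$i$j) \<le> norm (A$i)" by (rule Finite_Cartesian_Product.norm_nth_le)
  also have "\<dots> \<le> norm A" by (rule Finite_Cartesian_Product.norm_nth_le)
  finally show ?thesis by simp
qed

lemma norm_le_sum_abs_entries: "norm (A::real^'n^'n) \<le> (\<Sum>i\<in>UNIV. \<Sum>j\<in>UNIV. \<bar>A$i$j\<bar>)"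
proof -
  have "norm A \<le> (\<Sum>i\<in>UNIV. norm (A$i))" by (simp add: norm_vec_def L2_set_le_sum)
  also have "\<dots> \<le> (\<Sum>i\<in>UNIV. \<Sum>j\<in>UNIV. \<bar>A$i$j\<bar>)"
    by (rule sum_mono) (metis norm_le_l1_cart real_norm_def)
  finally show ?thesis .
qed

lemma norm_le_card_sq_mult:
  assumes "\<And>i j. \<bar>(A::real^'n^'n)$i$j\<bar> \<le> c"
  shows "norm A \<le> real CARD('n) * (real CARD('n) * c)"
proof -
  have "norm A \<le> (\<Sum>i\<in>UNIV. \<Sum>j\<in>UNIV. \<bar>A$i$j\<bar>)" by (rule norm_le_sum_abs_entries)
  also have "\<dots> \<le> (\<Sum>i\<in>(UNIV::'n set). \<Sum>j\<in>(UNIV::'n set). c)" by (intro sum_mono assms)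
  finally show ?thesis by simp
qed

lemma abs_sum_le_card_mult:
  fixes f :: "'n::finite \<Rightarrow> real"
  assumes "\<And>k. \<bar>f k\<bar> \<le> c"
  shows "\<bar>\<Sum>k\<in>UNIV. f k\<bar> \<le> real CARD('n) * c"
proof -
  have "\<bar>\<Sum>k\<in>UNIV. f k\<bar> \<le> (\<Sum>k\<in>UNIV. \<bar>f k\<bar>)" by (rule sum_abs)
  also have "\<dots> \<le> (\<Sum>k\<in>(UNIV::'n set). c)" by (intro sum_mono assms)
  finally show ?thesis by simp
qed

lemma inner_matrix_mult_left: "((A::real^'n^'n) ** X) \<bullet> Y = X \<bullet> (transpose A ** Y)"
proof -
  have "(A ** X) \<bullet> Y = (\<Sum>i\<in>UNIV. \<Sum>j\<in>UNIV. \<Sum>k\<in>UNIV. A$i$k * X$k$j * Y$i$j)"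
    by (simp add: inner_vec_def matrix_matrix_mult_def sum_distrib_right)
  also have "\<dots> = (\<Sum>j\<in>UNIV. \<Sum>i\<in>UNIV. \<Sum>k\<in>UNIV. A$i$k * X$k$j * Y$i$j)"
    by (rule sum.swap)
  also have "\<dots> = (\<Sum>j\<in>UNIV. \<Sum>k\<in>UNIV. \<Sum>i\<in>UNIV. A$i$k * X$k$j * Y$i$j)"
    by (rule sum.cong[OF refl], rule sum.swap)
  also have "\<dots> = (\<Sum>k\<in>UNIV. \<Sum>j\<in>UNIV. \<Sum>i\<in>UNIV. A$i$k * X$k$j * Y$i$j)"
    by (rule sum.swap)
  also have "\<dots> = X \<bullet> (transpose A ** Y)"
    by (simp add: inner_vec_def matrix_matrix_mult_def transpose_def sum_distrib_left mult_ac)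
  finally show ?thesis .
qed

lemma inner_matrix_mult_right: "((X::real^'n^'n) ** A) \<bullet> Y = X \<bullet> (Y ** transpose A)"
proof -
  have "(X ** A) \<bullet> Y = (\<Sum>i\<in>UNIV. \<Sum>j\<in>UNIV. \<Sum>k\<in>UNIV. X$i$k * A$k$j * Y$i$j)"
    by (simp add: inner_vec_def matrix_matrix_mult_def sum_distrib_right)
  also have "\<dots> = (\<Sum>i\<in>UNIV. \<Sum>k\<in>UNIV. \<Sum>j\<in>UNIV. X$i$k * A$k$j * Y$i$j)"
    by (rule sum.cong[OF refl], rule sum.swap)
  also have "\<dots> = X \<bullet> (Y ** transpose A)"
    by (simp add: inner_vec_def matrix_matrix_mult_def transpose_def sum_distrib_left mult_ac)
  finally show ?thesis .
qed

lemma transpose_nth: "transpose (X::real^'n^'n) $ i $ j = X $ j $ i"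
  by (simp add: transpose_def)

lemma symmetric_nth: "transpose (X::real^'n^'n) = X \<Longrightarrow> X $ i $ j = X $ j $ i"
  by (metis transpose_nth)

lemma transpose_add: "transpose ((X::real^'n^'n) + Y) = transpose X + transpose Y"
  by (simp add: transpose_def vec_eq_iff)

lemma transpose_diff: "transpose ((X::real^'n^'n) - Y) = transpose X - transpose Y"
  by (simp add: transpose_def vec_eq_iff)

lemma inner_transpose_transpose: "transpose (A::real^'n^'n) \<bullet> transpose B = A \<bullet> B"
  unfolding inner_matrix_eq_sum transpose_nth by (rule sum.swap)

lemma matrix_add_rdistrib: "((B::real^'n^'n) + C) ** A = B ** A + C ** A"
  by (simp add: matrix_matrix_mult_def vec_eq_iff sum.distrib algebra_simps)

lemma matrix_diff_ldistrib: "(A::real^'n^'n) ** (B - C) = A ** B - A ** C"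
  by (simp add: matrix_matrix_mult_def vec_eq_iff sum_subtractf algebra_simps)

lemma matrix_diff_rdistrib: "((B::real^'n^'n) - C) ** A = B ** A - C ** A"
  by (simp add: matrix_matrix_mult_def vec_eq_iff sum_subtractf algebra_simps)

lemma diagm_nth: "(diagm d :: real^'n^'n)$i$j = (if i = j then d i else 0)"
  by (simp add: diagm_def)

lemma transpose_diagm: "transpose (diagm d :: real^'n^'n) = diagm d"
  by (simp add: vec_eq_iff transpose_nth diagm_nth)

lemma diagm_diff: "diagm d - diagm e = (diagm (\<lambda>i. d i - e i) :: real^'n^'n)"
  by (simp add: diagm_def vec_eq_iff)

lemma inner_diagm: "(diagm d :: real^'n^'n) \<bullet> Y = (\<Sum>i\<in>UNIV. d i * Y$i$i)"
  by (simp add: inner_matrix_eq_sum diagm_nth if_distrib if_distribR cong: if_cong)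

lemma inner_conj: "((Q::real^'n^'n) ** X ** transpose Q) \<bullet> W = X \<bullet> hatm Q W"
proof -
  have "(Q ** X ** transpose Q) \<bullet> W = (Q ** X) \<bullet> (W ** Q)"
    by (simp add: inner_matrix_mult_right)
  also have "\<dots> = X \<bullet> hatm Q W" by (simp add: inner_matrix_mult_left hatm_def matrix_mul_assoc)
  finally show ?thesis .
qed

lemma hatm_conj:
  assumes "orthogonal_matrix (Q::real^'n^'n)"
  shows "hatm Q (Q ** X ** transpose Q) = X"
proof -
  have "hatm Q (Q ** X ** transpose Q) = (transpose Q ** Q) ** X ** (transpose Q ** Q)"
    by (simp add: hatm_def matrix_mul_assoc)
  then show ?thesis using assms by (simp add: orthogonal_matrix_def)
qed

lemma conj_hatm:
  assumes "orthogonal_matrix (Q::real^'n^'n)"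
  shows "Q ** hatm Q H ** transpose Q = H"
proof -
  have "Q ** hatm Q H ** transpose Q = (Q ** transpose Q) ** H ** (Q ** transpose Q)"
    by (simp add: hatm_def matrix_mul_assoc)
  then show ?thesis using assms by (simp add: orthogonal_matrix_def)
qed

lemma inner_conj_conj:
  assumes "orthogonal_matrix (Q::real^'n^'n)"
  shows "(Q ** X ** transpose Q) \<bullet> (Q ** Y ** transpose Q) = X \<bullet> Y"
  by (simp add: inner_conj hatm_conj[OF assms])

lemma norm_conj:
  assumes "orthogonal_matrix (Q::real^'n^'n)"
  shows "norm (Q ** X ** transpose Q) = norm X"
  by (simp add: norm_eq_sqrt_inner inner_conj_conj[OF assms])

lemma norm_hatm:
  assumes "orthogonal_matrix (Q::real^'n^'n)"
  shows "norm (hatm Q H) = norm H"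
  using norm_conj[OF assms, of "hatm Q H"] conj_hatm[OF assms] by simp

lemma hatm_diff: "hatm Q ((X::real^'n^'n) - Y) = hatm Q X - hatm Q Y"
  by (simp add: hatm_def matrix_diff_ldistrib matrix_diff_rdistrib)

lemma hatm_scaleR: "hatm Q (c *\<^sub>R (H::real^'n^'n)) = c *\<^sub>R hatm Q H"
  by (simp add: hatm_def matrix_scalar_ac scalar_matrix_assoc)

lemma conj_add:
  "(Q::real^'n^'n) ** (X + Y) ** transpose Q = Q ** X ** transpose Q + Q ** Y ** transpose Q"
  by (simp add: matrix_add_ldistrib matrix_add_rdistrib)

lemma conj_diff:
  "(Q::real^'n^'n) ** (X - Y) ** transpose Q = Q ** X ** transpose Q - Q ** Y ** transpose Q"
  by (simp add: matrix_diff_ldistrib matrix_diff_rdistrib)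

lemma symmetric_hatm: "transpose (H::real^'n^'n) = H \<Longrightarrow> transpose (hatm Q H) = hatm Q H"
  by (simp add: hatm_def matrix_transpose_mul matrix_mul_assoc)

lemma symmetric_conj:
  "transpose (H::real^'n^'n) = H \<Longrightarrow> transpose (Q ** H ** transpose Q) = Q ** H ** transpose Q"
  by (simp add: matrix_transpose_mul matrix_mul_assoc)

section \<open>Projection onto a closed convex cone\<close>

lemma proj_onto_eq_closest_point:
  fixes K :: "'a::euclidean_space set"
  assumes "closed K" "convex K" "K \<noteq> {}"
  shows "proj_onto K z = closest_point K z"
  unfolding proj_onto_def
proof (rule the_equality)
  show "closest_point K z \<in> K \<and> (\<forall>Q\<in>K. dist z (closest_point K z) \<le> dist z Q)"
    using closest_point_exists[OF assms(1,3)] by auto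
  fix P assume "P \<in> K \<and> (\<forall>Q\<in>K. dist z P \<le> dist z Q)"
  then show "P = closest_point K z"
    using closest_point_unique[OF assms(2,1)] by blast
qed

lemma proj_onto_lipschitz:
  fixes K :: "'a::euclidean_space set"
  assumes "closed K" "convex K" "K \<noteq> {}"
  shows "norm (proj_onto K x - proj_onto K y) \<le> norm (x - y)"
  using closest_point_lipschitz[OF assms(2,1,3)]
  by (simp add: proj_onto_eq_closest_point[OF assms] dist_norm)

lemma proj_onto_cone:
  fixes K :: "'a::euclidean_space set"
  assumes "closed K" "convex_cone K"
  shows proj_onto_cone_in: "proj_onto K z \<in> K"
    and proj_onto_cone_orthogonal: "(z - proj_onto K z) \<bullet> proj_onto K z = 0"
    and proj_onto_cone_polar: "\<And>Y. Y \<in> K \<Longrightarrow> (z - proj_onto K z) \<bullet> Y \<le> 0"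
proof -
  have K: "convex K" "K \<noteq> {}" using assms(2) by (simp_all add: convex_cone_def)
  have K0: "0 \<in> K" using assms(2) by (simp add: convex_cone_iff)
  let ?P = "proj_onto K z"
  have eq: "?P = closest_point K z" by (rule proj_onto_eq_closest_point[OF assms(1) K(1,2)])
  show P: "?P \<in> K" unfolding eq by (rule closest_point_in_set[OF assms(1) K(2)])
  have dot: "(z - ?P) \<bullet> (Y - ?P) \<le> 0" if "Y \<in> K" for Y
    unfolding eq by (rule closest_point_dot[OF K(1) assms(1) that])
  have "(z - ?P) \<bullet> (0 - ?P) \<le> 0" "(z - ?P) \<bullet> (2 *\<^sub>R ?P - ?P) \<le> 0"
    using dot[OF K0] dot[OF convex_cone_scaleR[OF assms(2) _ P, of 2]] by auto
  then show orth: "(z - ?P) \<bullet> ?P = 0"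
    by (simp add: inner_diff_right algebra_simps)
  fix Y assume "Y \<in> K"
  then show "(z - ?P) \<bullet> Y \<le> 0" using dot orth by (fastforce simp: inner_diff_right)
qed

lemma proj_onto_cone_eqI:
  fixes K :: "'a::euclidean_space set"
  assumes "closed K" "convex_cone K" and P: "P \<in> K" "(z - P) \<bullet> P = 0"
    "\<And>Y. Y \<in> K \<Longrightarrow> (z - P) \<bullet> Y \<le> 0"
  shows "proj_onto K z = P"
proof -
  have K: "convex K" "K \<noteq> {}" using assms(2) by (auto simp: convex_cone_def)
  have "dist z P \<le> dist z Y" if "Y \<in> K" for Y
  proof -
    have "(norm (z - Y))\<^sup>2 = (norm (z - P))\<^sup>2 - 2 * ((z - P) \<bullet> Y) + (norm (Y - P))\<^sup>2"
      using P(2) by (simp add: power2_norm_eq_inner inner_diff_left inner_diff_right inner_commute)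
    moreover have "0 \<le> (norm (Y - P))\<^sup>2" by simp
    ultimately have "(norm (z - P))\<^sup>2 \<le> (norm (z - Y))\<^sup>2" using P(3)[OF that] by linarith
    then show ?thesis unfolding dist_norm by (rule power2_le_imp_le) simp
  qed
  then have "P = closest_point K z" using closest_point_unique[OF K(1) assms(1) P(1)] by blast
  then show ?thesis using proj_onto_eq_closest_point[OF assms(1) K] by simp
qed

lemma proj_onto_cone_scaleR:
  fixes K :: "'a::euclidean_space set"
  assumes K: "closed K" "convex_cone K" and "0 \<le> t"
  shows "proj_onto K (t *\<^sub>R z) = t *\<^sub>R proj_onto K z"
proof (rule proj_onto_cone_eqI[OF K])
  let ?P = "proj_onto K z"
  have e: "t *\<^sub>R z - t *\<^sub>R ?P = t *\<^sub>R (z - ?P)" by (simp add: scaleR_diff_right)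
  show "t *\<^sub>R ?P \<in> K" using convex_cone_scaleR[OF K(2) \<open>0 \<le> t\<close> proj_onto_cone_in[OF K]] .
  show "(t *\<^sub>R z - t *\<^sub>R ?P) \<bullet> (t *\<^sub>R ?P) = 0" unfolding e
    using proj_onto_cone_orthogonal[OF K] by simp
  fix Y assume "Y \<in> K"
  then show "(t *\<^sub>R z - t *\<^sub>R ?P) \<bullet> Y \<le> 0" unfolding e
    using proj_onto_cone_polar[OF K] \<open>0 \<le> t\<close> by (simp add: mult_nonneg_nonpos)
qed

section \<open>Positive semidefinite matrices\<close>

lemma inner_matrix_vector_symmetric:
  "transpose (N::real^'n^'n) = N \<Longrightarrow> x \<bullet> (N *v y) = y \<bullet> (N *v x)"
  by (metis dot_lmul_matrix inner_commute transpose_matrix_vector)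

lemma inner_axis_matrix_axis: "axis i 1 \<bullet> ((N::real^'n^'n) *v axis j 1) = N$i$j"
  unfolding inner_axis' by (simp add: matrix_vector_mult_def axis_def if_distrib if_distribR cong: if_cong)

lemma quadratic_nonneg_discriminant:
  fixes a b c :: real
  assumes "\<And>s t. 0 \<le> a * s\<^sup>2 + 2 * b * s * t + c * t\<^sup>2"
  shows "b\<^sup>2 \<le> a * c"
proof (cases "c = 0")
  case True
  have "b = 0"
  proof (rule ccontr)
    assume b: "b \<noteq> 0"
    have "0 \<le> a * 1\<^sup>2 + 2 * b * 1 * (-(a+1)/(2*b)) + c * (-(a+1)/(2*b))\<^sup>2" by (rule assms)
    also have "\<dots> = -1" using b True by (simp add: field_simps)
    finally show False by simp
  qed
  then show ?thesis using True by simp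
next
  case False
  then have "c > 0" using assms[of 0 1] by simp
  have "0 \<le> a * c\<^sup>2 + 2 * b * c * (-b) + c * (-b)\<^sup>2" by (rule assms)
  also have "\<dots> = c * (a * c - b\<^sup>2)" by (simp add: algebra_simps power2_eq_square)
  finally show ?thesis using \<open>c > 0\<close> by (simp add: zero_le_mult_iff)
qed

lemma psd_Cauchy_Schwarz:
  assumes "psd (N::real^'n^'n)"
  shows "(x \<bullet> (N *v y))\<^sup>2 \<le> (x \<bullet> (N *v x)) * (y \<bullet> (N *v y))"
proof (rule quadratic_nonneg_discriminant)
  fix s t
  have "transpose N = N" using assms by (simp add: psd_def)
  then have "(s *\<^sub>R x + t *\<^sub>R y) \<bullet> (N *v (s *\<^sub>R x + t *\<^sub>R y))
      = (x \<bullet> (N *v x)) * s\<^sup>2 + 2 * (x \<bullet> (N *v y)) * s * t + (y \<bullet> (N *v y)) * t\<^sup>2"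
    using inner_matrix_vector_symmetric[of N x y]
    by (simp add: matrix_vector_right_distrib matrix_vector_mult_scaleR inner_add_left
        inner_add_right algebra_simps power2_eq_square)
  then show "0 \<le> (x \<bullet> (N *v x)) * s\<^sup>2 + 2 * (x \<bullet> (N *v y)) * s * t + (y \<bullet> (N *v y)) * t\<^sup>2"
    using assms by (metis psd_def)
qed

lemma psd_diag_nonneg: "psd (N::real^'n^'n) \<Longrightarrow> 0 \<le> N$i$i"
  by (metis psd_def inner_axis_matrix_axis)

lemma psd_entry_sq_le: "psd (N::real^'n^'n) \<Longrightarrow> (N$i$j)\<^sup>2 \<le> N$i$i * N$j$j"
  using psd_Cauchy_Schwarz[of N "axis i 1" "axis j 1"] by (simp add: inner_axis_matrix_axis)

lemma inner_outer_product: "(P::real^'n^'n) \<bullet> (\<chi> i j. x$i * x$j) = x \<bullet> (P *v x)"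
  by (simp add: inner_vec_def matrix_vector_mult_def sum_distrib_left mult_ac)

lemma psd_outer_product: "psd ((\<chi> i j. x$i * x$j)::real^'n^'n)"
proof -
  have "y \<bullet> ((\<chi> i j. x$i * x$j) *v y) = (x \<bullet> y)\<^sup>2" for y :: "real^'n"
    by (simp add: inner_vec_def matrix_vector_mult_def power2_eq_square sum_product
        sum_distrib_left mult_ac)
  then show ?thesis by (simp add: psd_def vec_eq_iff transpose_nth mult.commute)
qed

lemma psd_if_inner_nonneg:
  assumes "transpose (N::real^'n^'n) = N" "\<And>Y. psd Y \<Longrightarrow> 0 \<le> N \<bullet> Y"
  shows "psd N"
  using assms(2)[OF psd_outer_product] by (simp add: psd_def assms(1) inner_outer_product)

lemma psd_add: "psd X \<Longrightarrow> psd Y \<Longrightarrow> psd ((X::real^'n^'n) + Y)"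
  by (simp add: psd_def transpose_add matrix_vector_mult_add_rdistrib inner_add_right)

lemma psd_scaleR:
  assumes "psd X" "0 \<le> c" shows "psd (c *\<^sub>R (X::real^'n^'n))"
proof -
  have "(c *\<^sub>R X) *v x = c *\<^sub>R (X *v x)" for x
    by (simp add: vec_eq_iff matrix_vector_mult_def sum_distrib_left mult.assoc)
  then show ?thesis using assms by (simp add: psd_def transpose_scalar)
qed

lemma psd_zero: "psd (0::real^'n^'n)"
  by (simp add: psd_def vec_eq_iff transpose_nth)

lemma psd_diagm:
  assumes "\<And>i. 0 \<le> d i" shows "psd (diagm d :: real^'n^'n)"
proof -
  have "x \<bullet> (diagm d *v x) = (\<Sum>i\<in>UNIV. d i * (x$i)\<^sup>2)" for x :: "real^'n"
    by (simp add: inner_vec_def matrix_vector_mult_def diagm_nth if_distrib if_distribR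
        power2_eq_square mult_ac cong: if_cong)
  then show ?thesis using assms by (simp add: psd_def transpose_diagm sum_nonneg)
qed

lemma psd_congruence:
  fixes A X :: "real^'n^'n"
  assumes "psd X"
  shows "psd (A ** X ** transpose A)"
  unfolding psd_def
proof (intro conjI allI)
  show "transpose (A ** X ** transpose A) = A ** X ** transpose A"
    using assms by (simp add: psd_def matrix_transpose_mul matrix_mul_assoc)
  fix x :: "real^'n"
  have "x \<bullet> ((A ** X ** transpose A) *v x) = (transpose A *v x) \<bullet> (X *v (transpose A *v x))"
    by (simp only: matrix_vector_mul_assoc[symmetric] dot_lmul_matrix[symmetric]
        transpose_matrix_vector)
  then show "0 \<le> x \<bullet> ((A ** X ** transpose A) *v x)" using assms by (simp add: psd_def)
qed

lemma closed_psd: "closed {N::real^'n^'n. psd N}"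
proof -
  have "{N::real^'n^'n. psd N} = {N. \<forall>i j. N$i$j = N$j$i} \<inter> {N. \<forall>x. 0 \<le> x \<bullet> (N *v x)}"
    unfolding psd_def by (auto simp: vec_eq_iff transpose_nth)
  moreover have "closed {N::real^'n^'n. \<forall>x. 0 \<le> x \<bullet> (N *v x)}"
    unfolding inner_vec_def matrix_vector_mult_def
    by (intro closed_Collect_all closed_Collect_le continuous_intros)
  ultimately show ?thesis
    by (auto intro!: closed_Collect_all closed_Collect_eq continuous_intros)
qed

lemma convex_cone_psd: "convex_cone {N::real^'n^'n. psd N}"
  by (simp add: convex_cone_iff psd_zero psd_add psd_scaleR)

lemmas psd_cone = closed_psd convex_cone_psd

lemma projPSD_psd: "psd (projPSD Z)"
  using proj_onto_cone_in[OF psd_cone] by (simp add: projPSD_def)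

lemma symmetric_projPSD: "transpose (projPSD Z) = projPSD Z"
  using projPSD_psd[of Z] by (simp add: psd_def)

lemma projPSD_lipschitz: "norm (projPSD X - projPSD Y) \<le> norm (X - Y)"
  unfolding projPSD_def
  by (rule proj_onto_lipschitz) (use psd_cone in \<open>auto simp: convex_cone_def\<close>)

lemma inner_projPSD_residual_nonneg:
  assumes "psd Y" shows "0 \<le> (projPSD Z - Z) \<bullet> Y"
proof -
  have "(Z - projPSD Z) \<bullet> Y \<le> 0"
    unfolding projPSD_def by (rule proj_onto_cone_polar[OF psd_cone]) (simp add: assms)
  then show ?thesis by (simp add: inner_diff_left)
qed

lemma inner_projPSD_residual: "projPSD Z \<bullet> (projPSD Z - Z) = 0"
  using proj_onto_cone_orthogonal[OF psd_cone, of Z]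
  by (simp add: projPSD_def inner_commute inner_diff_left inner_diff_right)

lemma projPSD_residual_psd: "transpose Z = Z \<Longrightarrow> psd (projPSD Z - Z)"
  by (rule psd_if_inner_nonneg)
    (simp_all add: transpose_diff symmetric_projPSD inner_projPSD_residual_nonneg)

lemma linear_quadratic_nonneg_imp_zero:
  fixes g h :: real
  assumes "0 \<le> h" "\<And>t. 0 \<le> t * g + t\<^sup>2 * h"
  shows "g = 0"
proof (rule ccontr)
  assume "g \<noteq> 0"
  let ?t = "- g / (2 * (h + 1))"
  have "?t * g + ?t\<^sup>2 * h = - g\<^sup>2 * (h + 2) / (4 * (h + 1)\<^sup>2)"
    using assms(1) by (simp add: power2_eq_square divide_simps) (simp add: algebra_simps)
  also have "\<dots> < 0" using \<open>g \<noteq> 0\<close> assms(1) by (simp add: divide_neg_pos)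
  finally show False using assms(2)[of ?t] by simp
qed

text \<open>If \<open>P\<close> is positive semidefinite and \<open>N\<close> lies in the dual cone with \<open>P \<bullet> N = 0\<close>,
  then \<open>t \<mapsto> N \<bullet> ((I + tE) P (I + tE)\<^sup>T)\<close> with \<open>E = NP\<close> is a nonnegative quadratic
  vanishing at \<open>0\<close>; its linear coefficient \<open>2 \<parallel>NP\<parallel>\<^sup>2\<close> must therefore vanish.\<close>

lemma dual_orthogonal_mult_zero:
  fixes P N :: "real^'n^'n"
  assumes P: "psd P" and N: "transpose N = N" "\<And>Y. psd Y \<Longrightarrow> 0 \<le> N \<bullet> Y" and PN: "P \<bullet> N = 0"
  shows "N ** P = 0"
proof -
  have symP: "transpose P = P" using P by (simp add: psd_def)
  define E where "E = N ** P"
  let ?g = "N \<bullet> (E ** P) + N \<bullet> (P ** transpose E)"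
  let ?h = "N \<bullet> (E ** P ** transpose E)"
  have "0 \<le> t * ?g + t\<^sup>2 * ?h" for t
  proof -
    let ?A = "mat 1 + t *\<^sub>R E"
    have "?A ** P ** transpose ?A
        = P + t *\<^sub>R (E ** P + P ** transpose E) + t\<^sup>2 *\<^sub>R (E ** P ** transpose E)"
      by (simp add: transpose_add transpose_scalar matrix_add_ldistrib matrix_add_rdistrib
          matrix_scalar_ac scalar_matrix_assoc scaleR_add_right power2_eq_square algebra_simps)
    then have "N \<bullet> (?A ** P ** transpose ?A) = t * ?g + t\<^sup>2 * ?h"
      using PN by (simp add: inner_add_right inner_commute)
    then show ?thesis using N(2)[OF psd_congruence[OF P, of ?A]] by simp
  qed
  then have "?g = 0"
    by (rule linear_quadratic_nonneg_imp_zero[OF N(2)[OF psd_congruence[OF P, of E]]])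
  moreover have "N \<bullet> (E ** P) = E \<bullet> E"
    using inner_matrix_mult_right[of E P N] by (simp add: inner_commute symP E_def)
  moreover have "N \<bullet> (P ** transpose E) = E \<bullet> E"
  proof -
    have "P ** N = transpose E" by (simp add: E_def matrix_transpose_mul symP N(1))
    then have "N \<bullet> (P ** transpose E) = transpose E \<bullet> transpose E"
      using inner_matrix_mult_left[of P "transpose E" N] by (simp add: inner_commute symP)
    then show ?thesis by (simp add: inner_transpose_transpose)
  qed
  ultimately have "E \<bullet> E = 0" by simp
  then show ?thesis unfolding E_def by simp
qed

lemma projPSD_residual_mult:
  assumes "transpose Z = Z"
  shows "(projPSD Z - Z) ** projPSD Z = 0" and "projPSD Z ** (projPSD Z - Z) = 0"
proof -
  have sym: "transpose (projPSD Z - Z) = projPSD Z - Z"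
    using assms by (simp add: transpose_diff symmetric_projPSD)
  show NP: "(projPSD Z - Z) ** projPSD Z = 0"
    by (intro dual_orthogonal_mult_zero projPSD_psd sym inner_projPSD_residual_nonneg
        inner_projPSD_residual)
  have "projPSD Z ** (projPSD Z - Z) = transpose ((projPSD Z - Z) ** projPSD Z)"
    by (simp add: matrix_transpose_mul sym symmetric_projPSD)
  then show "projPSD Z ** (projPSD Z - Z) = 0" by (simp add: NP vec_eq_iff transpose_nth)
qed

lemma projPSD_conj:
  assumes Q: "orthogonal_matrix (Q::real^'n^'n)"
  shows "projPSD (Q ** X ** transpose Q) = Q ** projPSD X ** transpose Q"
  unfolding projPSD_def
proof (rule proj_onto_cone_eqI[OF psd_cone])
  let ?P = "proj_onto {N. psd N} X"
  have res: "Q ** X ** transpose Q - Q ** ?P ** transpose Q = Q ** (X - ?P) ** transpose Q"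
    by (simp add: conj_diff)
  show "Q ** ?P ** transpose Q \<in> {N. psd N}"
    using psd_congruence[OF projPSD_psd[of X, unfolded projPSD_def]] by simp
  show "(Q ** X ** transpose Q - Q ** ?P ** transpose Q) \<bullet> (Q ** ?P ** transpose Q) = 0"
    unfolding res inner_conj_conj[OF Q] by (rule proj_onto_cone_orthogonal[OF psd_cone])
  fix Y :: "real^'n^'n" assume "Y \<in> {N. psd N}"
  then have "hatm Q Y \<in> {N. psd N}" using psd_congruence[of Y "transpose Q"] by (simp add: hatm_def)
  then show "(Q ** X ** transpose Q - Q ** ?P ** transpose Q) \<bullet> Y \<le> 0"
    unfolding res inner_conj by (rule proj_onto_cone_polar[OF psd_cone])
qed

lemma projPSD_diagm: "projPSD (diagm lam :: real^'n^'n) = diagm (\<lambda>i. max (lam i) 0)"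
  unfolding projPSD_def
proof (rule proj_onto_cone_eqI[OF psd_cone])
  have res: "diagm lam - diagm (\<lambda>i. max (lam i) 0) = (diagm (\<lambda>i. min (lam i) 0) :: real^'n^'n)"
    unfolding diagm_diff by (rule arg_cong[where f=diagm]) auto
  show "diagm (\<lambda>i. max (lam i) 0) \<in> {N::real^'n^'n. psd N}" by (simp add: psd_diagm)
  show "(diagm lam - diagm (\<lambda>i. max (lam i) 0)) \<bullet> (diagm (\<lambda>i. max (lam i) 0) :: real^'n^'n) = 0"
    unfolding res inner_diagm diagm_nth by (intro sum.neutral) (simp add: min_def max_def)
  fix Y :: "real^'n^'n" assume "Y \<in> {N. psd N}"
  then show "(diagm lam - diagm (\<lambda>i. max (lam i) 0)) \<bullet> Y \<le> 0"
    unfolding res inner_diagm by (auto intro!: sum_nonpos mult_nonpos_nonneg psd_diag_nonneg)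
qed

definition supported_on :: "'n set \<Rightarrow> real^'n^'n \<Rightarrow> bool" where
  "supported_on \<beta> N \<longleftrightarrow> (\<forall>i j. \<not> (i \<in> \<beta> \<and> j \<in> \<beta>) \<longrightarrow> N$i$j = 0)"

definition restrict_block :: "'n set \<Rightarrow> real^'n^'n \<Rightarrow> real^'n^'n" where
  "restrict_block \<beta> M = (\<chi> i j. if i \<in> \<beta> \<and> j \<in> \<beta> then M$i$j else 0)"

lemma restrict_block_nth: "restrict_block \<beta> M $ i $ j = (if i \<in> \<beta> \<and> j \<in> \<beta> then M$i$j else 0)"
  by (simp add: restrict_block_def)

lemma restrict_block_add: "restrict_block \<beta> (X + Y) = restrict_block \<beta> X + restrict_block \<beta> Y"
  by (simp add: restrict_block_def vec_eq_iff)

lemma restrict_block_diff: "restrict_block \<beta> (X - Y) = restrict_block \<beta> X - restrict_block \<beta> Y"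
  by (simp add: restrict_block_def vec_eq_iff)

lemma restrict_block_scaleR: "restrict_block \<beta> (c *\<^sub>R X) = c *\<^sub>R restrict_block \<beta> X"
  by (simp add: restrict_block_def vec_eq_iff)

lemma norm_restrict_block_le: "norm (restrict_block \<beta> X) \<le> norm X"
  by (intro norm_le_componentwise_cart) (simp add: restrict_block_nth)

lemma inner_restrict_block: "restrict_block \<beta> X \<bullet> Y = X \<bullet> restrict_block \<beta> Y"
  unfolding inner_matrix_eq_sum restrict_block_nth by (intro sum.cong) auto

lemma restrict_block_supported: "supported_on \<beta> N \<Longrightarrow> restrict_block \<beta> N = N"
  by (auto simp: supported_on_def restrict_block_def vec_eq_iff)

lemma restrict_block_eq_conj:
  "restrict_block \<beta> M = diagm (indicator \<beta>) ** M ** transpose (diagm (indicator \<beta>))"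
  by (simp add: vec_eq_iff matrix_matrix_mult_def transpose_diagm diagm_nth restrict_block_nth
      indicator_def if_distrib if_distribR cong: if_cong)

lemma psd_restrict_block: "psd M \<Longrightarrow> psd (restrict_block \<beta> M)"
  unfolding restrict_block_eq_conj by (rule psd_congruence)

lemma closed_supported_on: "closed {N::real^'n^'n. supported_on \<beta> N}"
  unfolding supported_on_def
proof (intro closed_Collect_all)
  fix i j
  show "closed {N::real^'n^'n. \<not> (i \<in> \<beta> \<and> j \<in> \<beta>) \<longrightarrow> N$i$j = 0}"
    by (cases "i \<in> \<beta> \<and> j \<in> \<beta>") (auto intro!: closed_Collect_eq continuous_intros)
qed

lemma psd_block_cone:
  "closed {N::real^'n^'n. psd N \<and> supported_on \<beta> N}"
  "convex_cone {N::real^'n^'n. psd N \<and> supported_on \<beta> N}"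
proof -
  have "{N::real^'n^'n. psd N \<and> supported_on \<beta> N} = {N. psd N} \<inter> {N. supported_on \<beta> N}" by auto
  then show "closed {N::real^'n^'n. psd N \<and> supported_on \<beta> N}"
    using closed_psd closed_supported_on by (metis closed_Int)
  show "convex_cone {N::real^'n^'n. psd N \<and> supported_on \<beta> N}"
    by (auto simp: convex_cone_iff supported_on_def psd_zero psd_add psd_scaleR)
qed

lemma projPSD_block_eq:
  "projPSD_block \<beta> M = proj_onto {N. psd N \<and> supported_on \<beta> N} (restrict_block \<beta> M)"
proof -
  have "{N. psd N \<and> (\<forall>i j. N$i$j \<noteq> 0 \<longrightarrow> i \<in> \<beta> \<and> j \<in> \<beta>)} = {N. psd N \<and> supported_on \<beta> N}"
    by (auto simp: supported_on_def)
  then show ?thesis by (simp add: projPSD_block_def restrict_block_def)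
qed

lemma projPSD_block_in: "psd (projPSD_block \<beta> M)" "supported_on \<beta> (projPSD_block \<beta> M)"
proof -
  have "projPSD_block \<beta> M \<in> {N. psd N \<and> supported_on \<beta> N}"
    unfolding projPSD_block_eq by (rule proj_onto_cone_in[OF psd_block_cone])
  then show "psd (projPSD_block \<beta> M)" "supported_on \<beta> (projPSD_block \<beta> M)" by simp_all
qed

lemma projPSD_block_nth_outside:
  "\<not> (i \<in> \<beta> \<and> j \<in> \<beta>) \<Longrightarrow> projPSD_block \<beta> M $ i $ j = 0"
  using projPSD_block_in(2)[of \<beta> M] by (simp add: supported_on_def)

lemma symmetric_projPSD_block: "transpose (projPSD_block \<beta> M) = projPSD_block \<beta> M"
  using projPSD_block_in(1)[of \<beta> M] by (simp add: psd_def)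

lemma inner_projPSD_block_residual:
  "(restrict_block \<beta> M - projPSD_block \<beta> M) \<bullet> projPSD_block \<beta> M = 0"
  unfolding projPSD_block_eq by (rule proj_onto_cone_orthogonal[OF psd_block_cone])

lemma projPSD_block_lipschitz:
  "norm (projPSD_block \<beta> M1 - projPSD_block \<beta> M2) \<le> norm (M1 - M2)"
proof -
  have "norm (projPSD_block \<beta> M1 - projPSD_block \<beta> M2)
      \<le> norm (restrict_block \<beta> M1 - restrict_block \<beta> M2)"
    unfolding projPSD_block_eq
    by (rule proj_onto_lipschitz) (use psd_block_cone in \<open>auto simp: convex_cone_def\<close>)
  also have "\<dots> \<le> norm (M1 - M2)"
    using norm_restrict_block_le[of \<beta> "M1 - M2"] by (simp add: restrict_block_diff)
  finally show ?thesis .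
qed

lemma projPSD_block_scaleR: "0 \<le> c \<Longrightarrow> projPSD_block \<beta> (c *\<^sub>R M) = c *\<^sub>R projPSD_block \<beta> M"
  by (simp add: projPSD_block_eq restrict_block_scaleR proj_onto_cone_scaleR[OF psd_block_cone])

section \<open>The orthogonal projection onto the range of \<open>\<A>\<^sup>*\<close>\<close>

lemma opA_opAadj: "opA A (opAadj A y) = gramA A *v y"
  by (simp add: opA_def opAadj_def gramA_def matrix_vector_mult_def vec_eq_iff inner_sum_right mult_ac)

lemma inner_opAadj: "opAadj A y \<bullet> X = y \<bullet> opA A X"
proof -
  have "opAadj A y \<bullet> X = (\<Sum>k\<in>UNIV. y$k * (A k \<bullet> X))" by (simp add: opAadj_def inner_sum_left)
  also have "\<dots> = y \<bullet> opA A X" by (simp add: opA_def inner_vec_def)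
  finally show ?thesis .
qed

lemma opA_add: "opA A (X + Y) = opA A X + opA A Y"
  by (simp add: opA_def vec_eq_iff inner_add_right)

lemma opA_diff: "opA A (X - Y) = opA A X - opA A Y"
  by (simp add: opA_def vec_eq_iff inner_diff_right)

lemma opAadj_add: "opAadj A (x + y) = opAadj A x + opAadj A y"
  by (simp add: opAadj_def scaleR_add_left sum.distrib)

lemma opAadj_diff: "opAadj A (x - y) = opAadj A x - opAadj A y"
  by (simp add: opAadj_def scaleR_diff_left sum_subtractf)

lemma opAadj_scaleR: "opAadj A (c *\<^sub>R x) = c *\<^sub>R opAadj A x"
  by (simp add: opAadj_def scaleR_sum_right)

lemma symmetric_opAadj:
  assumes "\<And>i. transpose (A i) = A i"
  shows "transpose (opAadj A y) = opAadj A y"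
proof -
  have "transpose (opAadj A y) = (\<Sum>i\<in>UNIV. y$i *\<^sub>R transpose (A i))"
    by (simp add: opAadj_def transpose_def vec_eq_iff)
  then show ?thesis using assms by (simp add: opAadj_def)
qed

lemma projP_add: "projP A (X + Y) = projP A X + projP A Y"
  by (simp add: projP_def opA_add matrix_vector_right_distrib opAadj_add)

lemma projP_diff: "projP A (X - Y) = projP A X - projP A Y"
  by (simp add: projP_def opA_diff matrix_vector_mult_diff_distrib opAadj_diff)

lemma projP_scaleR: "projP A (c *\<^sub>R X) = c *\<^sub>R projP A X"
proof -
  have "opA A (c *\<^sub>R X) = c *\<^sub>R opA A X" by (simp add: opA_def vec_eq_iff)
  then show ?thesis by (simp add: projP_def matrix_vector_mult_scaleR opAadj_scaleR)
qed

lemma symmetric_projP: "(\<And>i. transpose (A i) = A i) \<Longrightarrow> transpose (projP A H) = projP A H"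
  unfolding projP_def by (rule symmetric_opAadj)

lemma invertible_gramA:
  assumes surj: "\<forall>v. \<exists>X. transpose X = X \<and> opA A X = v"
  shows "invertible (gramA A)"
proof -
  have "y = 0" if "gramA A *v y = 0" for y
  proof -
    have "opAadj A y \<bullet> opAadj A y = 0"
      by (simp add: inner_opAadj opA_opAadj that)
    moreover obtain X where "opA A X = y" using surj by blast
    ultimately show "y = 0" by (metis inner_eq_zero_iff inner_opAadj inner_zero_left)
  qed
  then have "\<exists>B. B ** gramA A = mat 1" using matrix_left_invertible_ker by blast
  then show ?thesis using invertible_left_inverse by blast
qed

lemma matrix_mult_matrix_inv:
  assumes "invertible (M::real^'m^'m)"
  shows "M ** matrix_inv M = mat 1"
proof -
  have "\<exists>M'. M ** M' = mat 1 \<and> M' ** M = mat 1" using assms unfolding invertible_def by blast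
  then show ?thesis unfolding matrix_inv_def by (rule someI2_ex) simp
qed

locale surjective_opA =
  fixes A :: "'m::finite \<Rightarrow> real^'n^'n"
  assumes surj: "\<forall>v. \<exists>X. transpose X = X \<and> opA A X = v"
begin

lemma opA_projP: "opA A (projP A H) = opA A H"
proof -
  have "gramA A ** matrix_inv (gramA A) = mat 1"
    using invertible_gramA[OF surj] by (rule matrix_mult_matrix_inv)
  then show ?thesis by (simp add: projP_def opA_opAadj matrix_vector_mul_assoc)
qed

lemma inner_projP_complement: "projP A X \<bullet> (Y - projP A Y) = 0"
  unfolding projP_def[of A X] inner_opAadj by (simp add: opA_diff opA_projP)

lemma norm_projP_sum_sq:
  "(norm (projP A a + (b - projP A b)))\<^sup>2 = (norm (projP A a))\<^sup>2 + (norm (b - projP A b))\<^sup>2"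
  using inner_projP_complement[of a b]
  by (simp add: power2_norm_eq_inner inner_add_left inner_add_right
      inner_commute[of "b - projP A b" "projP A a"])

lemma projP_pythagoras: "(norm (projP A X))\<^sup>2 + (norm (X - projP A X))\<^sup>2 = (norm X)\<^sup>2"
  using norm_projP_sum_sq[of X X] by simp

lemma norm_projP_le: "norm (projP A X) \<le> norm X"
proof (rule power2_le_imp_le)
  show "(norm (projP A X))\<^sup>2 \<le> (norm X)\<^sup>2"
    using projP_pythagoras[of X] zero_le_power2[of "norm (X - projP A X)"] by linarith
qed simp

lemma norm_projP_complement_le: "norm (X - projP A X) \<le> norm X"
proof (rule power2_le_imp_le)
  show "(norm (X - projP A X))\<^sup>2 \<le> (norm X)\<^sup>2"
    using projP_pythagoras[of X] zero_le_power2[of "norm (projP A X)"] by linarith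
qed simp

lemma norm_reflection_projP: "norm (X - 2 *\<^sub>R projP A X) = norm X"
proof -
  have neg: "projP A (- X) = - projP A X" using projP_scaleR[of A "-1" X] by simp
  have eq: "X - 2 *\<^sub>R projP A X = projP A (- X) + (X - projP A X)"
    using neg by (simp add: scaleR_2)
  have "(norm (X - 2 *\<^sub>R projP A X))\<^sup>2 = (norm (projP A X))\<^sup>2 + (norm (X - projP A X))\<^sup>2"
    unfolding eq norm_projP_sum_sq by (simp add: neg)
  also have "\<dots> = (norm X)\<^sup>2" by (rule projP_pythagoras)
  finally show ?thesis by (simp add: power2_eq_iff_nonneg)
qed

lemma norm_projP_eq_imp_range: "norm (projP A X) = norm X \<Longrightarrow> X \<in> range (opAadj A)"
proof -
  assume "norm (projP A X) = norm X"
  then have "X = projP A X" using projP_pythagoras[of X] by simp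
  then show ?thesis unfolding projP_def by (metis rangeI)
qed

lemma norm_projP_complement_eq_imp_kernel: "norm (X - projP A X) = norm X \<Longrightarrow> opA A X = 0"
proof -
  assume "norm (X - projP A X) = norm X"
  then have "projP A X = 0" using projP_pythagoras[of X] by simp
  then have "opA A X = opA A 0" by (metis opA_projP)
  then show ?thesis by (simp add: opA_def vec_eq_iff)
qed

end

section \<open>First-order expansion of the projection at a diagonal matrix\<close>

definition Dtilde_diag :: "('n::finite \<Rightarrow> real) \<Rightarrow> real^'n^'n \<Rightarrow> real^'n^'n" where
  "Dtilde_diag lam Hh = (\<chi> i j.
     if (lam i > 0 \<and> lam j \<ge> 0) \<or> (lam i \<ge> 0 \<and> lam j > 0) then Hh$i$j
     else if lam i = 0 \<and> lam j = 0 then projPSD_block {i. lam i = 0} Hh $ i $ j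
     else if lam i < 0 \<and> lam j > 0 then lam j / (lam j - lam i) * Hh$i$j
     else if lam i > 0 \<and> lam j < 0 then lam i / (lam i - lam j) * Hh$j$i
     else 0)"

lemma Dtilde_eq_conj: "Dtilde Q lam H = Q ** Dtilde_diag lam (hatm Q H) ** transpose Q"
  by (simp add: Dtilde_def Dtilde_diag_def Let_def)

lemma Dtilde_diag_nth: "Dtilde_diag lam Hh $ i $ j =
     (if (lam i > 0 \<and> lam j \<ge> 0) \<or> (lam i \<ge> 0 \<and> lam j > 0) then Hh$i$j
     else if lam i = 0 \<and> lam j = 0 then projPSD_block {i. lam i = 0} Hh $ i $ j
     else if lam i < 0 \<and> lam j > 0 then lam j / (lam j - lam i) * Hh$i$j
     else if lam i > 0 \<and> lam j < 0 then lam i / (lam i - lam j) * Hh$j$i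
     else 0)"
  by (simp add: Dtilde_diag_def)

text \<open>The \<open>1\<close> keeps the minimum well defined when all eigenvalues vanish.\<close>

definition eig_gap :: "('n::finite \<Rightarrow> real) \<Rightarrow> real" where
  "eig_gap lam = Min (insert 1 ((\<lambda>i. \<bar>lam i\<bar>) ` {i. lam i \<noteq> 0}))"

lemma eig_gap_pos: "0 < eig_gap lam"
  unfolding eig_gap_def by (subst Min_gr_iff) auto

lemma eig_gap_le: "lam i \<noteq> 0 \<Longrightarrow> eig_gap lam \<le> \<bar>lam i\<bar>"
  unfolding eig_gap_def by (rule Min_le) auto

lemma diagm_mult_nth: "(diagm d ** M :: real^'n^'n)$i$j = d i * M$i$j"
  by (simp add: matrix_matrix_mult_def diagm_nth if_distrib if_distribR cong: if_cong)

lemma mult_diagm_nth: "(M ** diagm d :: real^'n^'n)$i$j = M$i$j * d j"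
  by (simp add: matrix_matrix_mult_def diagm_nth if_distrib if_distribR cong: if_cong)

lemma abs_matrix_mult_nth_le:
  assumes "\<And>k. \<bar>(A::real^'n^'n)$i$k\<bar> \<le> a" "\<And>k. \<bar>(B::real^'n^'n)$k$j\<bar> \<le> b"
  shows "\<bar>(A ** B)$i$j\<bar> \<le> real CARD('n) * (a * b)"
  unfolding matrix_matrix_mult_def vec_lambda_beta
proof (rule abs_sum_le_card_mult)
  fix k
  have "0 \<le> a" using assms(1)[of k] by simp
  then show "\<bar>A$i$k * B$k$j\<bar> \<le> a * b" unfolding abs_mult using assms by (intro mult_mono) auto
qed

lemma abs_le_of_sq_le: "x\<^sup>2 \<le> y\<^sup>2 \<Longrightarrow> 0 \<le> (y::real) \<Longrightarrow> \<bar>x\<bar> \<le> y"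
  using power2_le_imp_le[of "\<bar>x\<bar>" y] by simp

lemma le_sqrt_of_le_1:
  fixes x :: real
  assumes "0 \<le> x" "x \<le> 1"
  shows "x \<le> sqrt x"
proof -
  have "sqrt x * sqrt x \<le> sqrt x" using assms by (intro mult_left_le) auto
  then show ?thesis using assms(1) by simp
qed

text \<open>The entries of the remainder are of orders \<open>h\<^sup>3\<^sup>/\<^sup>2\<close>, \<open>h\<^sup>2\<close> and \<open>(h \<cdot> h\<^sup>3\<^sup>/\<^sup>2)\<^sup>1\<^sup>/\<^sup>2\<close>;
  for \<open>h \<le> 1\<close> all of them are bounded by \<open>h\<^sup>5\<^sup>/\<^sup>4\<close>.\<close>

lemma power_bounds_five_quarters:
  fixes h :: real
  assumes "0 \<le> h" "h \<le> 1"
  shows "h * sqrt h \<le> h * sqrt (sqrt h)" "h\<^sup>2 \<le> h * sqrt (sqrt h)"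
    and "sqrt (h * (h * sqrt h)) = h * sqrt (sqrt h)"
proof -
  have s: "sqrt h \<le> sqrt (sqrt h)" "h \<le> sqrt h"
    using assms by (simp_all add: le_sqrt_of_le_1)
  show "h * sqrt h \<le> h * sqrt (sqrt h)" using s(1) assms(1) by (rule mult_left_mono)
  have "h \<le> sqrt (sqrt h)" using s by linarith
  then show "h\<^sup>2 \<le> h * sqrt (sqrt h)"
    unfolding power2_eq_square using assms(1) by (rule mult_left_mono)
  have "h * (h * sqrt h) = (h * sqrt (sqrt h))\<^sup>2"
    using assms(1) by (simp add: power2_eq_square power_mult_distrib real_sqrt_mult[symmetric])
  then show "sqrt (h * (h * sqrt h)) = h * sqrt (sqrt h)" using assms(1) by simp
qed

locale psd_proj_perturbation =
  fixes lam :: "'n::finite \<Rightarrow> real" and G :: "real^'n^'n"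
  assumes symmetric_G: "transpose G = G"
begin

abbreviation "h \<equiv> norm G"
abbreviation "\<mu> \<equiv> eig_gap lam"

definition "Lam_pos = (diagm (\<lambda>i. max (lam i) 0) :: real^'n^'n)"
definition "Lam_neg = (diagm (\<lambda>i. - min (lam i) 0) :: real^'n^'n)"
definition "P = projPSD (diagm lam + G)"
definition "N = P - (diagm lam + G)"
definition "dP = P - Lam_pos"
definition "dN = N - Lam_neg"

lemma symmetric_perturbed: "transpose (diagm lam + G) = diagm lam + G"
  by (simp add: transpose_add transpose_diagm symmetric_G)

lemma P_psd: "psd P" and N_psd: "psd N"
  and N_mult_P: "N ** P = 0" and P_mult_N: "P ** N = 0"
  using projPSD_psd projPSD_residual_psd projPSD_residual_mult symmetric_perturbed
  by (simp_all add: P_def N_def)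

lemma inner_P_N: "P \<bullet> N = 0"
  unfolding P_def N_def by (rule inner_projPSD_residual)

lemma symmetric_N: "transpose N = N"
  using N_psd by (simp add: psd_def)

lemma norm_dP_le: "norm dP \<le> h"
  using projPSD_lipschitz[of "diagm lam + G" "diagm lam"]
  by (simp add: dP_def P_def Lam_pos_def projPSD_diagm)

lemma dN_eq: "dN = dP - G"
proof -
  have "diagm lam = Lam_pos - Lam_neg"
    unfolding Lam_pos_def Lam_neg_def diagm_diff by (rule arg_cong[where f=diagm]) auto
  then show ?thesis by (simp add: dN_def dP_def N_def)
qed

lemma norm_dN_le: "norm dN \<le> 2 * h"
  using norm_triangle_ineq4[of dP G] norm_dP_le by (simp add: dN_eq)

lemma P_nth: "P$i$j = dP$i$j + (if i = j then max (lam i) 0 else 0)"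
  by (simp add: dP_def Lam_pos_def diagm_nth)

lemma N_nth: "N$i$j = dN$i$j + (if i = j then - min (lam i) 0 else 0)"
  by (simp add: dN_def Lam_neg_def diagm_nth)

text \<open>Complementarity \<open>P \<bullet> N = 0\<close> makes the diagonal of \<open>N\<close> on the positive eigenvalues and the
  diagonal of \<open>P\<close> on the negative ones quadratically small.\<close>

lemma complementary_diag_sum_le:
  "(\<Sum>i\<in>UNIV. max (lam i) 0 * N$i$i) + (\<Sum>i\<in>UNIV. - min (lam i) 0 * P$i$i) \<le> 2 * h\<^sup>2"
proof -
  have "Lam_pos \<bullet> Lam_neg = 0"
    unfolding Lam_pos_def Lam_neg_def inner_diagm diagm_nth
    by (intro sum.neutral) (simp add: min_def max_def)
  then have "Lam_pos \<bullet> N + P \<bullet> Lam_neg = P \<bullet> N - dP \<bullet> dN"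
    by (simp add: dP_def dN_def inner_diff_left inner_diff_right)
  also have "\<dots> \<le> norm dP * norm dN"
    using inner_P_N Cauchy_Schwarz_ineq2[of dP dN] by (simp add: abs_le_iff)
  also have "\<dots> \<le> h * (2 * h)" using norm_dP_le norm_dN_le by (intro mult_mono) auto
  finally show ?thesis
    by (simp add: Lam_pos_def Lam_neg_def inner_diagm inner_commute[of P] power2_eq_square)
qed

lemma N_diag_le_of_pos: assumes "lam i > 0" shows "N$i$i \<le> 2 * h\<^sup>2 / \<mu>"
proof -
  have "max (lam i) 0 * N$i$i \<le> (\<Sum>j\<in>UNIV. max (lam j) 0 * N$j$j)"
    by (rule member_le_sum) (auto intro!: mult_nonneg_nonneg psd_diag_nonneg[OF N_psd])
  moreover have "0 \<le> (\<Sum>j\<in>UNIV. - min (lam j) 0 * P$j$j)"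
    by (auto intro!: sum_nonneg mult_nonpos_nonneg psd_diag_nonneg[OF P_psd])
  moreover have "\<mu> * N$i$i \<le> lam i * N$i$i"
    using eig_gap_le[of lam i] assms psd_diag_nonneg[OF N_psd, of i] by (intro mult_right_mono) auto
  ultimately have "\<mu> * N$i$i \<le> 2 * h\<^sup>2" using complementary_diag_sum_le assms by simp
  then show ?thesis using eig_gap_pos[of lam] by (simp add: pos_le_divide_eq mult.commute)
qed

lemma P_diag_le_of_neg: assumes "lam i < 0" shows "P$i$i \<le> 2 * h\<^sup>2 / \<mu>"
proof -
  have "- min (lam i) 0 * P$i$i \<le> (\<Sum>j\<in>UNIV. - min (lam j) 0 * P$j$j)"
    by (rule member_le_sum) (auto intro!: mult_nonpos_nonneg psd_diag_nonneg[OF P_psd])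
  moreover have "0 \<le> (\<Sum>j\<in>UNIV. max (lam j) 0 * N$j$j)"
    by (auto intro!: sum_nonneg mult_nonneg_nonneg psd_diag_nonneg[OF N_psd])
  moreover have "\<mu> * P$i$i \<le> - lam i * P$i$i"
    using eig_gap_le[of lam i] assms psd_diag_nonneg[OF P_psd, of i] by (intro mult_right_mono) auto
  ultimately have "\<mu> * P$i$i \<le> 2 * h\<^sup>2" using complementary_diag_sum_le assms by simp
  then show ?thesis using eig_gap_pos[of lam] by (simp add: pos_le_divide_eq mult.commute)
qed

lemma abs_dP_nth_le: "\<bar>dP$i$j\<bar> \<le> h"
  using abs_entry_le_norm[of dP i j] norm_dP_le by simp

lemma abs_dN_nth_le: "\<bar>dN$i$j\<bar> \<le> 2 * h"
  using abs_entry_le_norm[of dN i j] norm_dN_le by simp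

lemma abs_le_of_sq_le_diag_bounds:
  assumes "x\<^sup>2 \<le> a * b" "0 \<le> a" "0 \<le> b" "a \<le> 2 * h\<^sup>2 / \<mu>" "b \<le> 2 * h"
  shows "\<bar>x\<bar> \<le> 2 / sqrt \<mu> * (h * sqrt h)"
proof (rule abs_le_of_sq_le)
  have "a * b \<le> (2 * h\<^sup>2 / \<mu>) * (2 * h)" using assms by (intro mult_mono) auto
  also have "\<dots> = (2 / sqrt \<mu> * (h * sqrt h))\<^sup>2"
    using eig_gap_pos[of lam] by (simp add: power2_eq_square field_simps)
  finally show "x\<^sup>2 \<le> (2 / sqrt \<mu> * (h * sqrt h))\<^sup>2" using assms(1) by linarith
qed (use eig_gap_pos[of lam] in simp)

lemma abs_N_nth_le:
  assumes "(lam i > 0 \<and> lam j \<ge> 0) \<or> (lam i \<ge> 0 \<and> lam j > 0)"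
  shows "\<bar>N$i$j\<bar> \<le> 2 / sqrt \<mu> * (h * sqrt h)"
proof -
  have N_diag_le: "N$k$k \<le> 2 * h" if "lam k \<ge> 0" for k
    using N_nth[of k k] abs_dN_nth_le[of k k] that by (simp add: abs_le_iff)
  have "(N$i$j)\<^sup>2 \<le> N$i$i * N$j$j" "(N$i$j)\<^sup>2 \<le> N$j$j * N$i$i"
    using psd_entry_sq_le[OF N_psd, of i j] by (simp_all add: mult.commute)
  then show ?thesis using assms N_diag_le N_diag_le_of_pos psd_diag_nonneg[OF N_psd]
    by (metis abs_le_of_sq_le_diag_bounds)
qed

lemma abs_P_nth_le:
  assumes "(lam i < 0 \<and> lam j \<le> 0) \<or> (lam i \<le> 0 \<and> lam j < 0)"
  shows "\<bar>P$i$j\<bar> \<le> 2 / sqrt \<mu> * (h * sqrt h)"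
proof -
  have P_diag_le: "P$k$k \<le> 2 * h" if "lam k \<le> 0" for k
    using P_nth[of k k] abs_dP_nth_le[of k k] that by (simp add: abs_le_iff)
  have "(P$i$j)\<^sup>2 \<le> P$i$i * P$j$j" "(P$i$j)\<^sup>2 \<le> P$j$j * P$i$i"
    using psd_entry_sq_le[OF P_psd, of i j] by (simp_all add: mult.commute)
  then show ?thesis using assms P_diag_le P_diag_le_of_neg psd_diag_nonneg[OF P_psd]
    by (metis abs_le_of_sq_le_diag_bounds)
qed

text \<open>The mixed block is read off the commutation \<open>P (\<Lambda> + G) = (\<Lambda> + G) P\<close>.\<close>

lemma P_commute: "P ** (diagm lam + G) = (diagm lam + G) ** P"
proof -
  have "diagm lam + G = P - N" by (simp add: N_def)
  then show ?thesis using N_mult_P P_mult_N by (simp add: matrix_diff_ldistrib matrix_diff_rdistrib)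
qed

lemma abs_P_nth_mixed_le:
  assumes ij: "lam i < 0" "lam j > 0"
  shows "\<bar>P$i$j - lam j / (lam j - lam i) * G$i$j\<bar> \<le> 2 * real CARD('n) / \<mu> * h\<^sup>2"
proof -
  have P_split: "P = dP + Lam_pos" by (simp add: dP_def)
  have PG: "(P ** G)$i$j = (dP ** G)$i$j" and GP: "(G ** P)$i$j = (G ** dP)$i$j + G$i$j * lam j"
    using ij by (simp_all add: P_split Lam_pos_def matrix_add_rdistrib matrix_add_ldistrib
        diagm_mult_nth mult_diagm_nth)
  have "(P ** (diagm lam + G))$i$j = ((diagm lam + G) ** P)$i$j" by (simp only: P_commute)
  then have eq: "P$i$j * (lam j - lam i) = lam j * G$i$j + ((G ** dP)$i$j - (dP ** G)$i$j)"
    using PG GP by (simp add: matrix_add_ldistrib matrix_add_rdistrib diagm_mult_nth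
        mult_diagm_nth algebra_simps)
  have "\<bar>(G ** dP)$i$j\<bar> \<le> real CARD('n) * (h * h)" "\<bar>(dP ** G)$i$j\<bar> \<le> real CARD('n) * (h * h)"
    by (intro abs_matrix_mult_nth_le abs_entry_le_norm abs_dP_nth_le)+
  then have R: "\<bar>(G ** dP)$i$j - (dP ** G)$i$j\<bar> \<le> 2 * real CARD('n) * h\<^sup>2"
    by (simp add: power2_eq_square)
  have gap: "\<mu> \<le> lam j - lam i" using eig_gap_le[of lam j] ij by simp
  have "\<bar>P$i$j - lam j / (lam j - lam i) * G$i$j\<bar>
      = \<bar>(G ** dP)$i$j - (dP ** G)$i$j\<bar> / (lam j - lam i)"
    using eq ij by (simp add: field_simps)
  also have "\<dots> \<le> 2 * real CARD('n) * h\<^sup>2 / \<mu>"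
    using R gap eig_gap_pos[of lam] by (intro frac_le) auto
  finally show ?thesis by simp
qed

abbreviation "\<beta> \<equiv> {i. lam i = 0}"
abbreviation "B \<equiv> projPSD_block \<beta> G"

lemma abs_P_nth_times_N_nth_le:
  assumes "lam i = 0" "lam k \<noteq> 0"
  shows "\<bar>P$i$k * N$i$k\<bar> \<le> 2 * h * (2 / sqrt \<mu> * (h * sqrt h))"
proof (cases "lam k > 0")
  case True
  have "\<bar>P$i$k\<bar> \<le> 2 * h" using P_nth[of i k] abs_dP_nth_le[of i k] assms by auto
  moreover have "\<bar>N$i$k\<bar> \<le> 2 / sqrt \<mu> * (h * sqrt h)" using abs_N_nth_le assms True by simp
  ultimately show ?thesis unfolding abs_mult by (intro mult_mono) auto
next
  case False
  have "\<bar>N$i$k\<bar> \<le> 2 * h" using N_nth[of i k] abs_dN_nth_le[of i k] assms by auto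
  moreover have "\<bar>P$i$k\<bar> \<le> 2 / sqrt \<mu> * (h * sqrt h)" using abs_P_nth_le assms False by simp
  ultimately show ?thesis unfolding abs_mult by (subst mult.commute) (intro mult_mono, auto)
qed

text \<open>On the null block, the rows of \<open>PN = 0\<close> show that \<open>P\<close> and \<open>N\<close> restricted to the block are
  nearly orthogonal.\<close>

lemma inner_restrict_P_N_le:
  "restrict_block \<beta> P \<bullet> restrict_block \<beta> N
     \<le> real CARD('n) * (real CARD('n) * (2 * h * (2 / sqrt \<mu> * (h * sqrt h))))"
proof -
  let ?C = "2 * h * (2 / sqrt \<mu> * (h * sqrt h))"
  have row: "\<bar>\<Sum>j\<in>UNIV. restrict_block \<beta> P $ i $ j * restrict_block \<beta> N $ i $ j\<bar>
      \<le> real CARD('n) * ?C" for i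
  proof (cases "lam i = 0")
    case True
    have "(\<Sum>j\<in>UNIV. P$i$j * N$i$j) = (P ** N)$i$i"
      by (simp add: matrix_matrix_mult_def symmetric_nth[OF symmetric_N, of i])
    then have row_zero: "(\<Sum>j\<in>UNIV. P$i$j * N$i$j) = 0" using P_mult_N by simp
    have "(\<Sum>j\<in>UNIV. restrict_block \<beta> P $ i $ j * restrict_block \<beta> N $ i $ j)
        = (\<Sum>j\<in>UNIV. P$i$j * N$i$j) - (\<Sum>j\<in>UNIV. if lam j = 0 then 0 else P$i$j * N$i$j)"
      unfolding sum_subtractf[symmetric] using True by (intro sum.cong) (auto simp: restrict_block_nth)
    also have "\<dots> = - (\<Sum>j\<in>UNIV. if lam j = 0 then 0 else P$i$j * N$i$j)"
      using row_zero by simp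
    also have "\<bar>\<dots>\<bar> \<le> real CARD('n) * ?C"
      using abs_P_nth_times_N_nth_le[OF True] eig_gap_pos[of lam]
      by (simp only: abs_minus_cancel) (intro abs_sum_le_card_mult, simp)
    finally show ?thesis .
  qed (use eig_gap_pos[of lam] in \<open>simp add: restrict_block_nth\<close>)
  have "restrict_block \<beta> P \<bullet> restrict_block \<beta> N
      \<le> \<bar>\<Sum>i\<in>UNIV. \<Sum>j\<in>UNIV. restrict_block \<beta> P $ i $ j * restrict_block \<beta> N $ i $ j\<bar>"
    by (simp add: inner_matrix_eq_sum)
  also have "\<dots> \<le> real CARD('n) * (real CARD('n) * ?C)" by (intro abs_sum_le_card_mult row)
  finally show ?thesis .
qed

lemma norm_restrict_P_minus_B_sq_le:
  "(norm (restrict_block \<beta> P - B))\<^sup>2 \<le> restrict_block \<beta> P \<bullet> restrict_block \<beta> N"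
proof -
  let ?rP = "restrict_block \<beta> P" and ?rN = "restrict_block \<beta> N" and ?rG = "restrict_block \<beta> G"
  have K: "closed {N::real^'n^'n. psd N \<and> supported_on \<beta> N}"
    "convex_cone {N::real^'n^'n. psd N \<and> supported_on \<beta> N}" by (rule psd_block_cone)+
  have B: "B = proj_onto {N. psd N \<and> supported_on \<beta> N} ?rG" by (rule projPSD_block_eq)
  have "restrict_block \<beta> (diagm lam) = 0" by (simp add: vec_eq_iff restrict_block_nth diagm_nth)
  then have "?rP - ?rN = ?rG" by (simp add: N_def restrict_block_diff[symmetric] restrict_block_add)
  then have eq: "?rP - B = ?rN - (B - ?rG)" by (simp add: algebra_simps)
  have "(?rG - B) \<bullet> B = 0" unfolding B by (rule proj_onto_cone_orthogonal[OF K])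
  then have "B \<bullet> (B - ?rG) = 0" by (simp add: inner_commute inner_diff_left inner_diff_right)
  moreover have "?rP \<in> {N. psd N \<and> supported_on \<beta> N}"
    using psd_restrict_block[OF P_psd] by (simp add: supported_on_def restrict_block_nth)
  then have "(?rG - B) \<bullet> ?rP \<le> 0" unfolding B by (rule proj_onto_cone_polar[OF K])
  then have "?rP \<bullet> (B - ?rG) \<ge> 0" by (simp add: inner_commute inner_diff_left inner_diff_right)
  moreover have "B \<bullet> ?rN \<ge> 0"
    using inner_projPSD_residual_nonneg[OF projPSD_block_in(1)]
    by (simp add: inner_restrict_block[symmetric] restrict_block_supported projPSD_block_in(2)
        inner_commute N_def P_def)
  moreover have "(norm (?rP - B))\<^sup>2 = (?rP - B) \<bullet> (?rN - (B - ?rG))"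
    by (simp only: power2_norm_eq_inner) (subst (2) eq, rule refl)
  then have "(norm (?rP - B))\<^sup>2 = ?rP \<bullet> ?rN - ?rP \<bullet> (B - ?rG) - B \<bullet> ?rN + B \<bullet> (B - ?rG)"
    by (simp add: inner_diff_left inner_diff_right)
  ultimately show ?thesis by linarith
qed

lemma abs_P_nth_null_le:
  assumes "lam i = 0" "lam j = 0"
  shows "\<bar>P$i$j - B$i$j\<bar> \<le> sqrt (real CARD('n) * (real CARD('n) * (2 * h * (2 / sqrt \<mu> * (h * sqrt h)))))"
proof -
  have "\<bar>P$i$j - B$i$j\<bar> = \<bar>(restrict_block \<beta> P - B)$i$j\<bar>" using assms by (simp add: restrict_block_nth)
  also have "\<dots> \<le> sqrt ((norm (restrict_block \<beta> P - B))\<^sup>2)"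
    using abs_entry_le_norm[of "restrict_block \<beta> P - B" i j] by simp
  also have "\<dots> \<le> sqrt (real CARD('n) * (real CARD('n) * (2 * h * (2 / sqrt \<mu> * (h * sqrt h)))))"
    using norm_restrict_P_minus_B_sq_le inner_restrict_P_N_le by (intro real_sqrt_le_mono) linarith
  finally show ?thesis .
qed

abbreviation "remainder_const \<equiv>
  2 / sqrt \<mu> + sqrt (real CARD('n) * (real CARD('n) * (4 / sqrt \<mu>))) + 2 * real CARD('n) / \<mu>"

lemma entry_bounds_le_remainder:
  assumes "h \<le> 1"
  shows "2 / sqrt \<mu> * (h * sqrt h) \<le> remainder_const * (h * sqrt (sqrt h))"
    and "2 * real CARD('n) / \<mu> * h\<^sup>2 \<le> remainder_const * (h * sqrt (sqrt h))"
    and "sqrt (real CARD('n) * (real CARD('n) * (2 * h * (2 / sqrt \<mu> * (h * sqrt h)))))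
      \<le> remainder_const * (h * sqrt (sqrt h))"
proof -
  have \<mu>: "0 < \<mu>" by (rule eig_gap_pos)
  note powers = power_bounds_five_quarters[OF norm_ge_zero assms]
  have \<omega>: "0 \<le> h * sqrt (sqrt h)" by simp
  show "2 / sqrt \<mu> * (h * sqrt h) \<le> remainder_const * (h * sqrt (sqrt h))"
    using \<mu> powers(1) \<omega> by (rule_tac mult_mono) auto
  show "2 * real CARD('n) / \<mu> * h\<^sup>2 \<le> remainder_const * (h * sqrt (sqrt h))"
    using \<mu> powers(2) \<omega> by (rule_tac mult_mono) auto
  have "sqrt (real CARD('n) * (real CARD('n) * (2 * h * (2 / sqrt \<mu> * (h * sqrt h)))))
      = sqrt (real CARD('n) * (real CARD('n) * (4 / sqrt \<mu>))) * sqrt (h * (h * sqrt h))"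
    by (simp add: real_sqrt_mult[symmetric] mult_ac)
  also have "\<dots> \<le> remainder_const * (h * sqrt (sqrt h))"
    unfolding powers(3) using \<mu> \<omega> by (intro mult_right_mono) auto
  finally show "sqrt (real CARD('n) * (real CARD('n) * (2 * h * (2 / sqrt \<mu> * (h * sqrt h)))))
      \<le> remainder_const * (h * sqrt (sqrt h))" .
qed

lemma abs_remainder_nth_le:
  assumes "h \<le> 1"
  shows "\<bar>(P - Lam_pos - Dtilde_diag lam G)$i$j\<bar> \<le> remainder_const * (h * sqrt (sqrt h))"
proof -
  note small = entry_bounds_le_remainder(1)[OF assms]
    and mixed = entry_bounds_le_remainder(2)[OF assms]
    and null = entry_bounds_le_remainder(3)[OF assms]
  have Lam_pos_nth: "Lam_pos$i$j = (if i = j then max (lam i) 0 else 0)"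
    by (simp add: Lam_pos_def diagm_nth)
  consider "(lam i > 0 \<and> lam j \<ge> 0) \<or> (lam i \<ge> 0 \<and> lam j > 0)" | "lam i = 0" "lam j = 0"
    | "lam i < 0" "lam j > 0" | "lam i > 0" "lam j < 0"
    | "(lam i < 0 \<and> lam j \<le> 0) \<or> (lam i \<le> 0 \<and> lam j < 0)"
    by linarith
  then show ?thesis
  proof cases
    case 1
    then have "(P - Lam_pos - Dtilde_diag lam G)$i$j = N$i$j"
      using N_nth[of i j] P_nth[of i j] dN_eq by (auto simp: Dtilde_diag_nth Lam_pos_nth)
    then show ?thesis using abs_N_nth_le[OF 1] small by simp
  next
    case 2
    then have "(P - Lam_pos - Dtilde_diag lam G)$i$j = P$i$j - B$i$j"
      by (simp add: Dtilde_diag_nth Lam_pos_nth)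
    then show ?thesis using abs_P_nth_null_le[OF 2] null by linarith
  next
    case 3
    then have "(P - Lam_pos - Dtilde_diag lam G)$i$j = P$i$j - lam j / (lam j - lam i) * G$i$j"
      by (auto simp: Dtilde_diag_nth Lam_pos_nth)
    then show ?thesis using abs_P_nth_mixed_le[OF 3] mixed by simp
  next
    case 4
    then have "(P - Lam_pos - Dtilde_diag lam G)$i$j = P$j$i - lam i / (lam i - lam j) * G$j$i"
      using symmetric_nth[OF symmetric_projPSD, of _ i j]
      by (auto simp: Dtilde_diag_nth Lam_pos_nth P_def)
    then show ?thesis using abs_P_nth_mixed_le[OF 4(2,1)] mixed by simp
  next
    case 5
    then have "(P - Lam_pos - Dtilde_diag lam G)$i$j = P$i$j"
      by (auto simp: Dtilde_diag_nth Lam_pos_nth)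
    then show ?thesis using abs_P_nth_le[OF 5] small by simp
  qed
qed

end

lemma projPSD_diagm_expansion:
  fixes lam :: "'n::finite \<Rightarrow> real"
  shows "\<exists>L\<ge>0. \<forall>G::real^'n^'n. transpose G = G \<longrightarrow> norm G \<le> 1 \<longrightarrow>
     norm (projPSD (diagm lam + G) - diagm (\<lambda>i. max (lam i) 0) - Dtilde_diag lam G)
       \<le> L * (norm G * sqrt (sqrt (norm G)))"
proof (intro exI conjI allI impI)
  let ?\<mu> = "eig_gap lam"
  let ?K = "2 / sqrt ?\<mu> + sqrt (real CARD('n) * (real CARD('n) * (4 / sqrt ?\<mu>)))
    + 2 * real CARD('n) / ?\<mu>"
  show "0 \<le> real CARD('n) * (real CARD('n) * ?K)" using eig_gap_pos[of lam] by simp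
  fix G :: "real^'n^'n" assume "transpose G = G" "norm G \<le> 1"
  then interpret psd_proj_perturbation lam G by unfold_locales
  have "norm (P - Lam_pos - Dtilde_diag lam G)
      \<le> real CARD('n) * (real CARD('n) * (?K * (norm G * sqrt (sqrt (norm G)))))"
    by (intro norm_le_card_sq_mult abs_remainder_nth_le \<open>norm G \<le> 1\<close>)
  then show "norm (projPSD (diagm lam + G) - diagm (\<lambda>i. max (lam i) 0) - Dtilde_diag lam G)
      \<le> real CARD('n) * (real CARD('n) * ?K) * (norm G * sqrt (sqrt (norm G)))"
    by (simp add: P_def Lam_pos_def mult_ac)
qed

section \<open>The linearized iteration map\<close>

definition mixed_weight :: "('n \<Rightarrow> real) \<Rightarrow> 'n \<Rightarrow> 'n \<Rightarrow> real" where
  "mixed_weight lam i j =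
     (if lam i < 0 \<and> lam j > 0 then lam j * - lam i / (lam j - lam i)\<^sup>2
      else if lam i > 0 \<and> lam j < 0 then lam i * - lam j / (lam i - lam j)\<^sup>2
      else 0)"

lemma mixed_weight_pos: "lam i < 0 \<Longrightarrow> lam j > 0 \<Longrightarrow> 0 < mixed_weight lam i j"
  by (simp add: mixed_weight_def) (intro divide_neg_pos mult_pos_neg, auto)

lemma mixed_weight_nonneg: "0 \<le> mixed_weight lam i j"
  using mixed_weight_pos[of lam i j] mixed_weight_pos[of lam j i]
  by (auto simp: mixed_weight_def mult.commute)

lemma Dtilde_diag_residual_nth:
  fixes lam :: "'n::finite \<Rightarrow> real" and Hh :: "real^'n^'n"
  assumes "transpose Hh = Hh"
  defines "D \<equiv> Dtilde_diag lam Hh" and "B \<equiv> projPSD_block {i. lam i = 0} Hh"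
  shows "(Hh$i$j - D$i$j) * D$i$j
    = (restrict_block {i. lam i = 0} Hh - B)$i$j * B$i$j + mixed_weight lam i j * (Hh$i$j)\<^sup>2"
proof -
  have B0: "B$i$j = 0" if "\<not> (lam i = 0 \<and> lam j = 0)"
    using that projPSD_block_nth_outside[of i "{i. lam i = 0}" j Hh] by (simp add: B_def)
  have weight: "(x - t * x) * (t * x) = t * (1 - t) * x\<^sup>2" for t x :: real
    by (simp add: algebra_simps power2_eq_square)
  have sym: "Hh$j$i = Hh$i$j" using symmetric_nth[OF assms(1)] by simp
  consider "lam i = 0" "lam j = 0" | "lam i < 0" "lam j > 0" | "lam i > 0" "lam j < 0"
    | "\<not> (lam i = 0 \<and> lam j = 0)" "\<not> (lam i < 0 \<and> lam j > 0)" "\<not> (lam i > 0 \<and> lam j < 0)"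
    by linarith
  then show ?thesis
  proof cases
    case 2
    let ?t = "lam j / (lam j - lam i)"
    have "D$i$j = ?t * Hh$i$j" using 2 by (simp add: D_def Dtilde_diag_nth)
    then have "(Hh$i$j - D$i$j) * D$i$j = ?t * (1 - ?t) * (Hh$i$j)\<^sup>2" by (simp only: weight)
    also have "\<dots> = mixed_weight lam i j * (Hh$i$j)\<^sup>2"
      using 2 by (simp add: mixed_weight_def field_simps power2_eq_square)
    finally show ?thesis using 2 B0 by simp
  next
    case 3
    let ?t = "lam i / (lam i - lam j)"
    have "D$i$j = ?t * Hh$i$j" using 3 sym by (simp add: D_def Dtilde_diag_nth)
    then have "(Hh$i$j - D$i$j) * D$i$j = ?t * (1 - ?t) * (Hh$i$j)\<^sup>2" by (simp only: weight)
    also have "\<dots> = mixed_weight lam i j * (Hh$i$j)\<^sup>2"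
      using 3 by (simp add: mixed_weight_def field_simps power2_eq_square)
    finally show ?thesis using 3 B0 by simp
  next
    case 1
    then show ?thesis by (simp add: D_def B_def Dtilde_diag_nth mixed_weight_def restrict_block_nth)
  next
    case 4
    then have "D$i$j = Hh$i$j \<or> D$i$j = 0" by (auto simp: D_def Dtilde_diag_nth)
    then show ?thesis using 4 B0 by (auto simp: mixed_weight_def)
  qed
qed

text \<open>The null block contributes nothing, by Moreau's decomposition for the block cone.\<close>

lemma inner_Dtilde_diag_residual:
  assumes "transpose Hh = Hh"
  shows "(Hh - Dtilde_diag lam Hh) \<bullet> Dtilde_diag lam Hh
    = (\<Sum>i\<in>UNIV. \<Sum>j\<in>UNIV. mixed_weight lam i j * (Hh$i$j)\<^sup>2)"
proof -
  let ?B = "projPSD_block {i. lam i = 0} Hh"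
  have "(Hh - Dtilde_diag lam Hh) \<bullet> Dtilde_diag lam Hh
      = (restrict_block {i. lam i = 0} Hh - ?B) \<bullet> ?B
        + (\<Sum>i\<in>UNIV. \<Sum>j\<in>UNIV. mixed_weight lam i j * (Hh$i$j)\<^sup>2)"
    by (simp add: inner_matrix_eq_sum Dtilde_diag_residual_nth[OF assms] sum.distrib)
  then show ?thesis by (simp add: inner_projPSD_block_residual)
qed

lemma inner_Dtilde_diag_residual_nonneg:
  "transpose Hh = Hh \<Longrightarrow> 0 \<le> (Hh - Dtilde_diag lam Hh) \<bullet> Dtilde_diag lam Hh"
  by (simp add: inner_Dtilde_diag_residual sum_nonneg mixed_weight_nonneg)

lemma inner_Dtilde_diag_residual_eq_0:
  assumes "transpose Hh = Hh" "(Hh - Dtilde_diag lam Hh) \<bullet> Dtilde_diag lam Hh = 0"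
    and "lam i < 0" "lam j > 0"
  shows "Hh$i$j = 0"
proof -
  have nonneg: "\<And>i j. 0 \<le> mixed_weight lam i j * (Hh$i$j)\<^sup>2" by (simp add: mixed_weight_nonneg)
  have "mixed_weight lam i j * (Hh$i$j)\<^sup>2 = 0"
    using assms(2) unfolding inner_Dtilde_diag_residual[OF assms(1)]
    by (subst (asm) sum_nonneg_eq_0_iff) (auto simp: sum_nonneg_eq_0_iff nonneg sum_nonneg)
  then show ?thesis using mixed_weight_pos[of lam i j, OF assms(3,4)] by simp
qed

lemma symmetric_Dtilde_diag:
  assumes "transpose Hh = Hh" shows "transpose (Dtilde_diag lam Hh) = Dtilde_diag lam Hh"
  using symmetric_nth[OF assms] symmetric_nth[OF symmetric_projPSD_block]
  by (auto simp: vec_eq_iff transpose_nth Dtilde_diag_nth)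

lemma abs_Dtilde_diag_diff_nth_le:
  "\<bar>(Dtilde_diag lam G1 - Dtilde_diag lam G2)$i$j\<bar> \<le> norm (G1 - G2)"
proof -
  have G: "\<bar>G1$a$b - G2$a$b\<bar> \<le> norm (G1 - G2)" for a b
    using abs_entry_le_norm[of "G1 - G2"] by simp
  have B: "\<bar>projPSD_block \<beta> G1 $i$j - projPSD_block \<beta> G2 $i$j\<bar> \<le> norm (G1 - G2)" for \<beta>
    using abs_entry_le_norm[of "projPSD_block \<beta> G1 - projPSD_block \<beta> G2" i j]
      projPSD_block_lipschitz[of \<beta> G1 G2] by simp
  have \<theta>: "\<bar>t * x - t * y\<bar> \<le> \<bar>x - y\<bar>" if "0 < t" "t < 1" for t x y :: real
    using that by (simp add: abs_mult mult_left_le_one_le flip: right_diff_distrib)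
  have ratio: "0 < a / (a - b)" "a / (a - b) < 1" if "b < 0" "0 < a" for a b :: real
    using that by (simp_all add: divide_simps)
  consider "lam i < 0" "lam j > 0" | "lam i > 0" "lam j < 0"
    | "\<not> (lam i < 0 \<and> lam j > 0)" "\<not> (lam i > 0 \<and> lam j < 0)" by linarith
  then show ?thesis
  proof cases
    case 1
    then show ?thesis using G[of i j] \<theta>[OF ratio[OF 1], of "G1$i$j" "G2$i$j"]
      by (simp add: Dtilde_diag_nth)
  next
    case 2
    then show ?thesis using G[of j i] \<theta>[OF ratio[OF 2(2,1)], of "G1$j$i" "G2$j$i"]
      by (simp add: Dtilde_diag_nth)
  next
    case 3
    let ?B = "projPSD_block {i. lam i = 0}"
    have "(Dtilde_diag lam G1 - Dtilde_diag lam G2)$i$j \<in>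
        {G1$i$j - G2$i$j, ?B G1 $i$j - ?B G2 $i$j, 0}"
      using 3 by (auto simp: Dtilde_diag_nth)
    then show ?thesis using G[of i j] B[of "{i. lam i = 0}"] norm_ge_zero[of "G1 - G2"] by auto
  qed
qed

lemma Dtilde_diag_scaleR: "0 \<le> c \<Longrightarrow> Dtilde_diag lam (c *\<^sub>R G) = c *\<^sub>R Dtilde_diag lam G"
  by (simp add: vec_eq_iff Dtilde_diag_nth projPSD_block_scaleR)

lemma Dtilde_decomposition_in_NX_NS:
  fixes Q :: "real^'n^'n" and lam :: "'n \<Rightarrow> real"
  assumes Q: "orthogonal_matrix Q" and H: "transpose H = H"
    and mixed: "\<And>i j. lam i < 0 \<Longrightarrow> lam j > 0 \<Longrightarrow> hatm Q H $ i $ j = 0"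
  shows "H - Dtilde Q lam H \<in> NX Q lam" and "Dtilde Q lam H \<in> NS Q lam"
proof -
  let ?Hh = "hatm Q H"
  let ?D = "Dtilde_diag lam ?Hh"
  have sHh: "transpose ?Hh = ?Hh" by (rule symmetric_hatm[OF H])
  have sD: "transpose ?D = ?D" by (rule symmetric_Dtilde_diag[OF sHh])
  have mixed': "?Hh $ i $ j = 0" if "lam i < 0 \<and> lam j > 0 \<or> lam i > 0 \<and> lam j < 0" for i j
    using that mixed[of i j] mixed[of j i] symmetric_nth[OF sHh, of i j] by auto
  have "H - Dtilde Q lam H = Q ** (?Hh - ?D) ** transpose Q"
    unfolding Dtilde_eq_conj conj_diff conj_hatm[OF Q] ..
  moreover have "(?Hh - ?D) $ i $ j = 0" if "lam i > 0 \<or> lam j > 0" for i j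
    using that mixed'[of i j] mixed'[of j i] by (auto simp: Dtilde_diag_nth)
  ultimately show "H - Dtilde Q lam H \<in> NX Q lam"
    unfolding NX_def using sHh sD by (auto simp: transpose_diff)
  have "?D $ i $ j = 0" if "lam i < 0 \<or> lam j < 0" for i j
    using that mixed'[of i j] mixed'[of j i] by (auto simp: Dtilde_diag_nth)
  then show "Dtilde Q lam H \<in> NS Q lam"
    unfolding NS_def Dtilde_eq_conj using sD by blast
qed

lemma Dtilde_scaleR: "0 \<le> c \<Longrightarrow> Dtilde Q lam (c *\<^sub>R H) = c *\<^sub>R Dtilde Q lam H"
  by (simp add: Dtilde_eq_conj hatm_scaleR Dtilde_diag_scaleR matrix_scalar_ac scalar_matrix_assoc)

lemma norm_Dtilde_diff_le:
  assumes Q: "orthogonal_matrix (Q::real^'n^'n)"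
  shows "norm (Dtilde Q lam H1 - Dtilde Q lam H2) \<le> real CARD('n) * (real CARD('n) * norm (H1 - H2))"
proof -
  have "norm (Dtilde Q lam H1 - Dtilde Q lam H2)
      = norm (Dtilde_diag lam (hatm Q H1) - Dtilde_diag lam (hatm Q H2))"
    by (simp add: Dtilde_eq_conj conj_diff[symmetric] norm_conj[OF Q])
  also have "\<dots> \<le> real CARD('n) * (real CARD('n) * norm (hatm Q H1 - hatm Q H2))"
    by (intro norm_le_card_sq_mult abs_Dtilde_diag_diff_nth_le)
  finally show ?thesis by (simp add: hatm_diff[symmetric] norm_hatm[OF Q])
qed

lemma Mtilde_scaleR: "0 \<le> c \<Longrightarrow> Mtilde A Q lam (c *\<^sub>R H) = c *\<^sub>R Mtilde A Q lam H"
  by (simp add: Mtilde_def Dtilde_scaleR projP_scaleR scaleR_add_right flip: scaleR_diff_right projP_diff)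

lemma compact_SUP_less:
  fixes f :: "'a::topological_space \<Rightarrow> real"
  assumes "compact S" "S \<noteq> {}" "continuous_on S f" "\<And>x. x \<in> S \<Longrightarrow> f x < c"
  shows "(SUP x\<in>S. f x) < c"
proof -
  obtain x0 where "x0 \<in> S" "\<And>x. x \<in> S \<Longrightarrow> f x \<le> f x0"
    using continuous_attains_sup[OF assms(1-3)] by blast
  then have "(SUP x\<in>S. f x) = f x0" by (intro cSup_eq_maximum) auto
  then show ?thesis using assms(4) \<open>x0 \<in> S\<close> by simp
qed

lemma compact_symmetric_sphere: "compact {H::real^'n^'n. transpose H = H \<and> norm H = 1}"
proof (rule compact_eq_bounded_closed[THEN iffD2], intro conjI)
  have eq: "{H::real^'n^'n. transpose H = H \<and> norm H = 1} = {H. \<forall>i j. H$i$j = H$j$i} \<inter> {H. norm H = 1}"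
    by (auto simp: vec_eq_iff transpose_nth)
  show "closed {H::real^'n^'n. transpose H = H \<and> norm H = 1}"
    unfolding eq by (intro closed_Int closed_Collect_all closed_Collect_eq continuous_intros)
qed (auto simp: bounded_iff)

lemma symmetric_sphere_nonempty: "{H::real^'n^'n. transpose H = H \<and> norm H = 1} \<noteq> {}"
proof -
  have "mat 1 \<noteq> (0 :: real^'n^'n)" by (simp add: mat_def vec_eq_iff)
  then have "(1 / norm (mat 1 :: real^'n^'n)) *\<^sub>R (mat 1 :: real^'n^'n) \<in> {H. transpose H = H \<and> norm H = 1}"
    by (simp add: transpose_scalar)
  then show ?thesis by blast
qed

context surjective_opA
begin

context
  fixes Q :: "real^'n^'n" and lam :: "'n \<Rightarrow> real"
  assumes Q: "orthogonal_matrix Q"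
begin

lemma inner_Dtilde_residual:
  "(H - Dtilde Q lam H) \<bullet> Dtilde Q lam H
    = (hatm Q H - Dtilde_diag lam (hatm Q H)) \<bullet> Dtilde_diag lam (hatm Q H)"
proof -
  have "H - Dtilde Q lam H = Q ** (hatm Q H - Dtilde_diag lam (hatm Q H)) ** transpose Q"
    unfolding Dtilde_eq_conj conj_diff conj_hatm[OF Q] ..
  then show ?thesis by (simp add: Dtilde_eq_conj inner_conj_conj[OF Q])
qed

lemma norm_Mtilde_sq:
  "(norm (Mtilde A Q lam H))\<^sup>2
    = (norm (projP A (H - Dtilde Q lam H)))\<^sup>2 + (norm (Dtilde Q lam H - projP A (Dtilde Q lam H)))\<^sup>2"
  unfolding Mtilde_def by (rule norm_projP_sum_sq)

lemma norm_sq_eq_Dtilde_split: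
  "(norm H)\<^sup>2 = (norm (H - Dtilde Q lam H))\<^sup>2 + (norm (Dtilde Q lam H))\<^sup>2
     + 2 * ((H - Dtilde Q lam H) \<bullet> Dtilde Q lam H)"
proof -
  have "(norm H)\<^sup>2 = ((H - Dtilde Q lam H) + Dtilde Q lam H) \<bullet> ((H - Dtilde Q lam H) + Dtilde Q lam H)"
    by (simp add: power2_norm_eq_inner)
  then show ?thesis
    by (simp only: inner_add_left inner_add_right power2_norm_eq_inner
        inner_commute[of "Dtilde Q lam H" "H - Dtilde Q lam H"])
qed

lemma norm_Mtilde_le:
  assumes "transpose H = H"
  shows "norm (Mtilde A Q lam H) \<le> norm H"
proof (rule power2_le_imp_le)
  have "0 \<le> (H - Dtilde Q lam H) \<bullet> Dtilde Q lam H"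
    unfolding inner_Dtilde_residual by (rule inner_Dtilde_diag_residual_nonneg[OF symmetric_hatm[OF assms]])
  moreover have "(norm (projP A (H - Dtilde Q lam H)))\<^sup>2 \<le> (norm (H - Dtilde Q lam H))\<^sup>2"
    "(norm (Dtilde Q lam H - projP A (Dtilde Q lam H)))\<^sup>2 \<le> (norm (Dtilde Q lam H))\<^sup>2"
    by (rule power_mono[OF norm_projP_le norm_ge_zero] power_mono[OF norm_projP_complement_le norm_ge_zero])+
  ultimately show "(norm (Mtilde A Q lam H))\<^sup>2 \<le> (norm H)\<^sup>2"
    using norm_Mtilde_sq[of H] norm_sq_eq_Dtilde_split[of H] by linarith
qed simp


lemma norm_Mtilde_less:
  assumes H: "transpose H = H" "H \<noteq> 0"
    and primal_nd: "NX Q lam \<inter> range (opAadj A) = {0}"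
    and dual_nd: "NS Q lam \<inter> {H. opA A H = 0} = {0}"
  shows "norm (Mtilde A Q lam H) < norm H"
proof (rule ccontr)
  let ?a = "H - Dtilde Q lam H" and ?b = "Dtilde Q lam H"
  assume "\<not> norm (Mtilde A Q lam H) < norm H"
  then have "(norm (Mtilde A Q lam H))\<^sup>2 = (norm H)\<^sup>2" using norm_Mtilde_le[OF H(1)] by simp
  moreover have "0 \<le> ?a \<bullet> ?b"
    unfolding inner_Dtilde_residual by (rule inner_Dtilde_diag_residual_nonneg[OF symmetric_hatm[OF H(1)]])
  moreover have "(norm (projP A ?a))\<^sup>2 \<le> (norm ?a)\<^sup>2" "(norm (?b - projP A ?b))\<^sup>2 \<le> (norm ?b)\<^sup>2"
    by (rule power_mono[OF norm_projP_le norm_ge_zero] power_mono[OF norm_projP_complement_le norm_ge_zero])+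
  ultimately have "?a \<bullet> ?b = 0" "(norm (projP A ?a))\<^sup>2 = (norm ?a)\<^sup>2"
    "(norm (?b - projP A ?b))\<^sup>2 = (norm ?b)\<^sup>2"
    using norm_Mtilde_sq[of H] norm_sq_eq_Dtilde_split[of H] by linarith+
  then have cross: "?a \<bullet> ?b = 0" and range: "?a \<in> range (opAadj A)" and kernel: "opA A ?b = 0"
    by (auto intro: norm_projP_eq_imp_range norm_projP_complement_eq_imp_kernel simp: power2_eq_iff_nonneg)
  have mixed: "hatm Q H $ i $ j = 0" if "lam i < 0" "lam j > 0" for i j
    using cross that unfolding inner_Dtilde_residual
    by (rule inner_Dtilde_diag_residual_eq_0[OF symmetric_hatm[OF H(1)]])
  have "?a \<in> NX Q lam" using mixed by (rule Dtilde_decomposition_in_NX_NS(1)[OF Q H(1)])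
  moreover have "?b \<in> NS Q lam" using mixed by (rule Dtilde_decomposition_in_NX_NS(2)[OF Q H(1)])
  ultimately have "?a = 0" "?b = 0" using primal_nd dual_nd range kernel by blast+
  then show False using H(2) by simp
qed

lemma norm_Mtilde_diff_le:
  "norm (Mtilde A Q lam H1 - Mtilde A Q lam H2)
     \<le> (1 + 2 * (real CARD('n) * real CARD('n))) * norm (H1 - H2)"
proof -
  let ?d = "Dtilde Q lam H1 - Dtilde Q lam H2"
  have "Mtilde A Q lam H1 - Mtilde A Q lam H2 = projP A ((H1 - H2) - ?d) + (?d - projP A ?d)"
    unfolding Mtilde_def by (simp add: projP_diff projP_add algebra_simps)
  then have "norm (Mtilde A Q lam H1 - Mtilde A Q lam H2)
      \<le> norm (projP A ((H1 - H2) - ?d)) + norm (?d - projP A ?d)"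
    by (simp add: norm_triangle_ineq)
  also have "\<dots> \<le> norm ((H1 - H2) - ?d) + norm ?d"
    by (intro add_mono norm_projP_le norm_projP_complement_le)
  also have "\<dots> \<le> norm (H1 - H2) + 2 * norm ?d" using norm_triangle_ineq4[of "H1 - H2" ?d] by simp
  also have "\<dots> \<le> norm (H1 - H2) + 2 * (real CARD('n) * (real CARD('n) * norm (H1 - H2)))"
    using norm_Dtilde_diff_le[OF Q, of lam H1 H2] by simp
  finally show ?thesis by (simp add: algebra_simps)
qed

lemma continuous_on_norm_Mtilde: "continuous_on S (\<lambda>H. norm (Mtilde A Q lam H))"
proof (rule lipschitz_on_continuous_on)
  show "(1 + 2 * (real CARD('n) * real CARD('n)))-lipschitz_on S (\<lambda>H. norm (Mtilde A Q lam H))"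
  proof (rule lipschitz_onI)
    fix x y :: "real^'n^'n"
    have "dist (norm (Mtilde A Q lam x)) (norm (Mtilde A Q lam y)) \<le> norm (Mtilde A Q lam x - Mtilde A Q lam y)"
      by (simp add: dist_real_def norm_triangle_ineq3)
    also have "\<dots> \<le> (1 + 2 * (real CARD('n) * real CARD('n))) * dist x y"
      unfolding dist_norm by (rule norm_Mtilde_diff_le)
    finally show "dist (norm (Mtilde A Q lam x)) (norm (Mtilde A Q lam y))
        \<le> (1 + 2 * (real CARD('n) * real CARD('n))) * dist x y" .
  qed simp
qed

lemma SUP_norm_Mtilde_less_1:
  assumes "NX Q lam \<inter> range (opAadj A) = {0}" "NS Q lam \<inter> {H. opA A H = 0} = {0}"
  shows "(SUP H\<in>{H. transpose H = H \<and> norm H = 1}. norm (Mtilde A Q lam H)) < 1"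
  by (rule compact_SUP_less[OF compact_symmetric_sphere symmetric_sphere_nonempty
        continuous_on_norm_Mtilde]) (use norm_Mtilde_less[OF _ _ assms] in fastforce)

lemma norm_Mtilde_le_SUP:
  assumes H: "transpose H = H"
  shows "norm (Mtilde A Q lam H)
    \<le> (SUP H\<in>{H. transpose H = H \<and> norm H = 1}. norm (Mtilde A Q lam H)) * norm H"
proof (cases "H = 0")
  case True
  then show ?thesis using Mtilde_scaleR[of 0 A Q lam H] by simp
next
  case False
  let ?S = "{H::real^'n^'n. transpose H = H \<and> norm H = 1}"
  let ?U = "(1 / norm H) *\<^sub>R H"
  have U: "?U \<in> ?S" using H False by (simp add: transpose_scalar)
  have "Mtilde A Q lam H = norm H *\<^sub>R Mtilde A Q lam ?U"
    using Mtilde_scaleR[of "1 / norm H" A Q lam H] False by simp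
  then have "norm (Mtilde A Q lam H) = norm (Mtilde A Q lam ?U) * norm H" by simp
  also have "\<dots> \<le> (SUP H\<in>?S. norm (Mtilde A Q lam H)) * norm H"
  proof (intro mult_right_mono cSUP_upper U norm_ge_zero)
    show "bdd_above ((\<lambda>H. norm (Mtilde A Q lam H)) ` ?S)"
    proof (rule bdd_aboveI2)
      fix x assume "x \<in> ?S"
      then show "norm (Mtilde A Q lam x) \<le> 1" using norm_Mtilde_le[of x] by simp
    qed
  qed
  finally show ?thesis .
qed

end

end

section \<open>Local behaviour of the ADMM iteration\<close>

lemma fixed_point_of_convergent_iteration:
  assumes "Z \<longlonglongrightarrow> z" "\<And>k. Z (Suc k) = T (Z k)" "isCont T z"
  shows "T z = z"
proof -
  have "(\<lambda>k. T (Z k)) \<longlonglongrightarrow> T z" using isCont_tendsto_compose[OF assms(3,1)] .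
  moreover have "(\<lambda>k. T (Z k)) \<longlonglongrightarrow> z" using LIMSEQ_Suc[OF assms(1)] assms(2) by simp
  ultimately show ?thesis by (rule LIMSEQ_unique)
qed

lemma eventually_linear_rate:
  fixes Z :: "nat \<Rightarrow> 'a::real_normed_vector"
  assumes lim: "Z \<longlonglongrightarrow> z" and iter: "\<And>k. Z (Suc k) = T (Z k)" and inv: "\<And>k. Z k \<in> S"
    and e: "isCont e 0" "e 0 = 0" and "0 < \<delta>"
    and bound: "\<And>x. x \<in> S \<Longrightarrow> norm (x - z) \<le> \<delta> \<Longrightarrow>
      norm (T x - z) \<le> (r + e (norm (x - z))) * norm (x - z)"
    and "r < \<rho>"
  shows "\<exists>K. \<forall>k\<ge>K. norm (Z (k + 1) - z) \<le> \<rho> * norm (Z k - z)"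
proof -
  have dist: "(\<lambda>k. norm (Z k - z)) \<longlonglongrightarrow> 0"
    using tendsto_norm_zero[OF LIM_zero[OF lim]] .
  have "(\<lambda>k. e (norm (Z k - z))) \<longlonglongrightarrow> 0" using isCont_tendsto_compose[OF e(1) dist] e(2) by simp
  then have "eventually (\<lambda>k. e (norm (Z k - z)) < \<rho> - r) sequentially"
    using \<open>r < \<rho>\<close> by (intro order_tendstoD) auto
  moreover have "eventually (\<lambda>k. norm (Z k - z) < \<delta>) sequentially"
    using dist \<open>0 < \<delta>\<close> by (intro order_tendstoD)
  ultimately have "eventually (\<lambda>k. e (norm (Z k - z)) < \<rho> - r \<and> norm (Z k - z) < \<delta>) sequentially"
    by (rule eventually_conj)
  then obtain K where K: "\<And>k. K \<le> k \<Longrightarrow> e (norm (Z k - z)) < \<rho> - r \<and> norm (Z k - z) < \<delta>"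
    unfolding eventually_sequentially by blast
  show ?thesis
  proof (intro exI allI impI)
    fix k assume "K \<le> k"
    have "norm (Z (k + 1) - z) \<le> (r + e (norm (Z k - z))) * norm (Z k - z)"
      using bound[OF inv] K[OF \<open>K \<le> k\<close>] by (simp add: iter)
    also have "\<dots> \<le> \<rho> * norm (Z k - z)" using K[OF \<open>K \<le> k\<close>] by (intro mult_right_mono) auto
    finally show "norm (Z (k + 1) - z) \<le> \<rho> * norm (Z k - z)" .
  qed
qed

lemma admm_step_diff:
  "admm_step A b C \<sigma> X - admm_step A b C \<sigma> Y
     = projP A ((X - Y) - 2 *\<^sub>R (projPSD X - projPSD Y)) + (projPSD X - projPSD Y)"
proof -
  have "(X - 2 *\<^sub>R projPSD X) - (Y - 2 *\<^sub>R projPSD Y) = (X - Y) - 2 *\<^sub>R (projPSD X - projPSD Y)"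
    by (simp add: scaleR_diff_right)
  then show ?thesis
    unfolding admm_step_def by (simp add: algebra_simps flip: projP_diff)
qed

lemma symmetric_admm_step:
  assumes "\<And>i. transpose (A i) = A i" "transpose C = C"
  shows "transpose (admm_step A b C \<sigma> X) = admm_step A b C \<sigma> X"
  by (simp add: admm_step_def transpose_add transpose_diff transpose_scalar assms
      symmetric_projP symmetric_projPSD symmetric_opAadj)

lemma projPSD_expansion:
  assumes Q: "orthogonal_matrix Q" and Zs: "Zs = Q ** diagm lam ** transpose Q"
  shows "\<exists>L\<ge>0. \<forall>H. transpose H = H \<longrightarrow> norm H \<le> 1 \<longrightarrow>
    norm (projPSD (Zs + H) - projPSD Zs - Dtilde Q lam H) \<le> L * (norm H * sqrt (sqrt (norm H)))"
proof -
  obtain L where "0 \<le> L" and L: "\<And>G. transpose G = G \<Longrightarrow> norm G \<le> 1 \<Longrightarrow>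
      norm (projPSD (diagm lam + G) - diagm (\<lambda>i. max (lam i) 0) - Dtilde_diag lam G)
        \<le> L * (norm G * sqrt (sqrt (norm G)))"
    using projPSD_diagm_expansion[of lam] by blast
  have "norm (projPSD (Zs + H) - projPSD Zs - Dtilde Q lam H) \<le> L * (norm H * sqrt (sqrt (norm H)))"
    if "transpose H = H" "norm H \<le> 1" for H
  proof -
    have "projPSD (Zs + H) - projPSD Zs - Dtilde Q lam H = Q **
        (projPSD (diagm lam + hatm Q H) - diagm (\<lambda>i. max (lam i) 0) - Dtilde_diag lam (hatm Q H))
        ** transpose Q"
    proof -
      have ZH: "Zs + H = Q ** (diagm lam + hatm Q H) ** transpose Q"
        unfolding Zs conj_add conj_hatm[OF Q] ..
      show ?thesis
        by (subst ZH) (simp only: Zs projPSD_conj[OF Q] projPSD_diagm Dtilde_eq_conj conj_diff)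
    qed
    then show ?thesis
      using L[OF symmetric_hatm[OF that(1), of Q]] that(2) by (simp add: norm_conj[OF Q] norm_hatm[OF Q])
  qed
  then show ?thesis using \<open>0 \<le> L\<close> by blast
qed

lemma admm_step_sub_fixed_point:
  fixes Q H :: "real^'n^'n" and lam :: "'n \<Rightarrow> real"
  assumes "admm_step A b C \<sigma> Zs = Zs"
  defines "E \<equiv> projPSD (Zs + H) - projPSD Zs - Dtilde Q lam H"
  shows "admm_step A b C \<sigma> (Zs + H) - Zs = Mtilde A Q lam H + (E - 2 *\<^sub>R projP A E)"
proof -
  have "projPSD (Zs + H) - projPSD Zs = Dtilde Q lam H + E" by (simp add: E_def)
  moreover have "2 * X = 2 *\<^sub>R X" for X :: "real^'n^'n" by (simp add: vec_eq_iff)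
    \<comment> \<open>the simplifier rewrites \<open>X + X\<close> to the componentwise product \<open>2 * X\<close>\<close>
  ultimately have "admm_step A b C \<sigma> (Zs + H) - admm_step A b C \<sigma> Zs
      = Mtilde A Q lam H + (E - 2 *\<^sub>R projP A E)"
    unfolding admm_step_diff Mtilde_def
    by (simp add: projP_diff projP_add projP_scaleR scaleR_diff_right scaleR_add_right)
  then show ?thesis by (simp add: assms(1))
qed

context surjective_opA
begin

lemma admm_step_lipschitz: "norm (admm_step A b C \<sigma> X - admm_step A b C \<sigma> Y) \<le> 4 * norm (X - Y)"
proof -
  let ?d = "projPSD X - projPSD Y"
  have "norm (admm_step A b C \<sigma> X - admm_step A b C \<sigma> Y)
      \<le> norm (projP A ((X - Y) - 2 *\<^sub>R ?d)) + norm ?d"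
    unfolding admm_step_diff by (rule norm_triangle_ineq)
  also have "\<dots> \<le> norm ((X - Y) - 2 *\<^sub>R ?d) + norm ?d" using norm_projP_le by simp
  also have "\<dots> \<le> norm (X - Y) + 3 * norm ?d"
    using norm_triangle_ineq4[of "X - Y" "2 *\<^sub>R ?d"] by simp
  also have "\<dots> \<le> 4 * norm (X - Y)" using projPSD_lipschitz[of X Y] by simp
  finally show ?thesis .
qed

lemma isCont_admm_step: "isCont (admm_step A b C \<sigma>) X"
proof -
  have "continuous_on UNIV (admm_step A b C \<sigma>)"
    by (rule lipschitz_on_continuous_on[where L=4], rule lipschitz_onI)
      (auto simp: dist_norm admm_step_lipschitz)
  then show ?thesis by (simp add: continuous_on_eq_continuous_at)
qed

lemma admm_step_local_bound:
  assumes Q: "orthogonal_matrix Q" and Zs: "Zs = Q ** diagm lam ** transpose Q"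
    and fixed: "admm_step A b C \<sigma> Zs = Zs"
  shows "\<exists>L\<ge>0. \<forall>X. transpose X = X \<longrightarrow> norm (X - Zs) \<le> 1 \<longrightarrow>
    norm (admm_step A b C \<sigma> X - Zs)
      \<le> ((SUP H\<in>{H. transpose H = H \<and> norm H = 1}. norm (Mtilde A Q lam H))
          + L * sqrt (sqrt (norm (X - Zs)))) * norm (X - Zs)"
proof -
  obtain L where "0 \<le> L" and L: "\<And>H. transpose H = H \<Longrightarrow> norm H \<le> 1 \<Longrightarrow>
      norm (projPSD (Zs + H) - projPSD Zs - Dtilde Q lam H) \<le> L * (norm H * sqrt (sqrt (norm H)))"
    using projPSD_expansion[OF Q Zs] by blast
  have symZs: "transpose Zs = Zs" unfolding Zs by (rule symmetric_conj) (rule transpose_diagm)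
  have "norm (admm_step A b C \<sigma> X - Zs)
      \<le> ((SUP H\<in>{H. transpose H = H \<and> norm H = 1}. norm (Mtilde A Q lam H))
          + L * sqrt (sqrt (norm (X - Zs)))) * norm (X - Zs)"
    if X: "transpose X = X" "norm (X - Zs) \<le> 1" for X
  proof -
    define H where "H = X - Zs"
    have H: "transpose H = H" using X(1) symZs by (simp add: H_def transpose_diff)
    define E where "E = projPSD (Zs + H) - projPSD Zs - Dtilde Q lam H"
    have "admm_step A b C \<sigma> X - Zs = Mtilde A Q lam H + (E - 2 *\<^sub>R projP A E)"
      using admm_step_sub_fixed_point[OF fixed, where H=H and Q=Q and lam=lam] by (simp add: H_def E_def)
    then have "norm (admm_step A b C \<sigma> X - Zs) \<le> norm (Mtilde A Q lam H) + norm E"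
      using norm_triangle_ineq[of "Mtilde A Q lam H" "E - 2 *\<^sub>R projP A E"]
      by (simp add: norm_reflection_projP)
    also have "\<dots> \<le> (SUP H\<in>{H. transpose H = H \<and> norm H = 1}. norm (Mtilde A Q lam H)) * norm H
        + L * (norm H * sqrt (sqrt (norm H)))"
      using norm_Mtilde_le_SUP[OF Q H] L[OF H] X(2) by (intro add_mono) (simp_all add: E_def H_def)
    finally show ?thesis by (simp add: H_def algebra_simps)
  qed
  then show ?thesis using \<open>0 \<le> L\<close> by blast
qed

end

theorem theorem5:
  fixes A :: "'m::finite \<Rightarrow> real^'n^'n" and b :: "real^'m" and C :: "real^'n^'n"
    and \<sigma> :: real and Z :: "nat \<Rightarrow> real^'n^'n"
    and Xs Ss :: "real^'n^'n" and ys :: "real^'m"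
    and Q :: "real^'n^'n" and lam :: "'n \<Rightarrow> real"
  assumes symA: "\<And>i. transpose (A i) = A i"
    and symC: "transpose C = C"
    and surj: "\<forall>v. \<exists>X. transpose X = X \<and> opA A X = v"
    and sigma: "\<sigma> > 0"
    and Z0: "transpose (Z 0) = Z 0"
    and iter: "\<And>k. Z (Suc k) = admm_step A b C \<sigma> (Z k)"
    and KKT: "is_KKT A b C Xs ys Ss"
    and lim: "Z \<longlonglongrightarrow> Xs - \<sigma> *\<^sub>R Ss"
    and orth: "orthogonal_matrix Q"
    and decZ: "Xs - \<sigma> *\<^sub>R Ss = Q ** diagm lam ** transpose Q"
    and decX: "Xs = Q ** diagm (\<lambda>i. max (lam i) 0) ** transpose Q"
    and decS: "\<sigma> *\<^sub>R Ss = Q ** diagm (\<lambda>i. - min (lam i) 0) ** transpose Q"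
    and primal_nd: "NX Q lam \<inter> range (opAadj A) = {0}"
    and dual_nd: "NS Q lam \<inter> {H. opA A H = 0} = {0}"
  shows "(SUP H\<in>{H. transpose H = H \<and> norm H = 1}. norm (Mtilde A Q lam H)) < 1 \<and>
         (\<forall>\<rho>. (SUP H\<in>{H. transpose H = H \<and> norm H = 1}. norm (Mtilde A Q lam H)) < \<rho> \<and> \<rho> < 1 \<longrightarrow>
            (\<exists>K::nat. \<forall>k\<ge>K. norm (Z (k + 1) - (Xs - \<sigma> *\<^sub>R Ss))
                          \<le> \<rho> * norm (Z k - (Xs - \<sigma> *\<^sub>R Ss))))"
proof -
  interpret surjective_opA A by unfold_locales (rule surj)
  let ?\<rho>\<^sub>N\<^sub>D = "SUP H\<in>{H. transpose H = H \<and> norm H = 1}. norm (Mtilde A Q lam H)"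
  have fixed: "admm_step A b C \<sigma> (Xs - \<sigma> *\<^sub>R Ss) = Xs - \<sigma> *\<^sub>R Ss"
    using lim iter isCont_admm_step by (rule fixed_point_of_convergent_iteration)
  have sym: "transpose (Z k) = Z k" for k
    by (induction k) (simp_all add: Z0 iter symmetric_admm_step symA symC)
  obtain L where L: "0 \<le> L" "\<forall>X. transpose X = X \<longrightarrow> norm (X - (Xs - \<sigma> *\<^sub>R Ss)) \<le> 1 \<longrightarrow>
      norm (admm_step A b C \<sigma> X - (Xs - \<sigma> *\<^sub>R Ss))
        \<le> (?\<rho>\<^sub>N\<^sub>D + L * sqrt (sqrt (norm (X - (Xs - \<sigma> *\<^sub>R Ss))))) * norm (X - (Xs - \<sigma> *\<^sub>R Ss))"
    using admm_step_local_bound[OF orth decZ fixed] by blast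
  have "\<exists>K. \<forall>k\<ge>K. norm (Z (k + 1) - (Xs - \<sigma> *\<^sub>R Ss)) \<le> \<rho> * norm (Z k - (Xs - \<sigma> *\<^sub>R Ss))"
    if "?\<rho>\<^sub>N\<^sub>D < \<rho>" for \<rho>
    by (rule eventually_linear_rate[OF lim iter, where S="{X. transpose X = X}"
          and e="\<lambda>t. L * sqrt (sqrt t)" and \<delta>=1])
      (use sym L(2) that in \<open>auto intro!: continuous_intros\<close>)
  then show ?thesis using SUP_norm_Mtilde_less_1[OF orth primal_nd dual_nd] by blast
qed

end
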